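(* For all $X, Y \subseteq \omega$, there exists an embedding $\mathcal{B}^X \hookrightarrow \mathcal{K}_1^Y$ if and only if $X'' \le_T Y$.
   Context: $X''$ denotes the double Turing jump of $X$. A pca is a set with a partial binary application operation containing distinct $\mathrm{s},\mathrm{k}$ with $\mathrm{k}ab\downarrow=a$, $\mathrm{s}ab\downarrow$, $\mathrm{s}abc\simeq(ac)(bc)$. An embedding of pcas is an injective map $f$ with: if $ab$ is defined then $f(a)f(b)$ is defined and equals $f(ab)$. $\mathcal{K}_1^Y$ is the pca on $\omega$ with $n\cdot m=\Phi^Y_n(m)$, the $n$-th partial $Y$-computable function applied to $m$. $\mathcal{B}^X$: elements are the partial $X$-computable functions $\omega\rightharpoonup\omega$, with $\varphi\cdot\psi$ the partial function $n\mapsto\Phi^{\varphi\oplus\psi}_{\varphi(0)}(n)$, where $\Phi_e$ is the $e$-th Turing functional, $(\varphi\oplus\psi)(2n)\simeq\varphi(n)$, $(\varphi\oplus\psi)(2n+1)\simeq\psi(n)$, and querying the oracle at an undefined point diverges. *)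

theory Defs
  imports Main "HOL-Library.Nat_Bijection"
begin

text \<open>Partial functions on the naturals; oracles are partial functions, a query
  at an undefined point diverges.\<close>

type_synonym pfun = "nat \<Rightarrow> nat option"

text \<open>Programs for unary partial recursive functionals (tuples coded by the
  Cantor pairing prod_encode).\<close>

datatype prog =
    Zero | Succ | Ident | Fst | Snd | Oracle
  | Pair prog prog | Comp prog prog | Rec prog prog | Mu prog

inductive eval :: "pfun \<Rightarrow> prog \<Rightarrow> nat \<Rightarrow> nat \<Rightarrow> bool" for \<alpha> :: pfun where
  ev_zero: "eval \<alpha> Zero x 0"
| ev_succ: "eval \<alpha> Succ x (Suc x)"
| ev_ident: "eval \<alpha> Ident x x"
| ev_fst: "eval \<alpha> Fst x (fst (prod_decode x))"
| ev_snd: "eval \<alpha> Snd x (snd (prod_decode x))"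
| ev_oracle: "\<alpha> x = Some v \<Longrightarrow> eval \<alpha> Oracle x v"
| ev_pair: "eval \<alpha> f x a \<Longrightarrow> eval \<alpha> g x b \<Longrightarrow> eval \<alpha> (Pair f g) x (prod_encode (a, b))"
| ev_comp: "eval \<alpha> g x y \<Longrightarrow> eval \<alpha> f y v \<Longrightarrow> eval \<alpha> (Comp f g) x v"
| ev_rec0: "eval \<alpha> f y v \<Longrightarrow> eval \<alpha> (Rec f g) (prod_encode (0, y)) v"
| ev_recS: "eval \<alpha> (Rec f g) (prod_encode (n, y)) w \<Longrightarrow>
            eval \<alpha> g (prod_encode (n, prod_encode (w, y))) v \<Longrightarrow>
            eval \<alpha> (Rec f g) (prod_encode (Suc n, y)) v"
| ev_mu: "eval \<alpha> f (prod_encode (n, x)) 0 \<Longrightarrow>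
          (\<forall>i<n. \<exists>v. v \<noteq> 0 \<and> eval \<alpha> f (prod_encode (i, x)) v) \<Longrightarrow>
          eval \<alpha> (Mu f) x n"

text \<open>An effective (surjective) numbering of programs.\<close>

lemma prod_decode_le: "prod_decode m = (a, b) \<Longrightarrow> a \<le> m \<and> b \<le> m"
  by (metis le_prod_encode_1 le_prod_encode_2 prod_decode_inverse)

function decode :: "nat \<Rightarrow> prog" where
  "decode n =
    (if n = 0 then Zero else if n = 1 then Succ else if n = 2 then Ident
     else if n = 3 then Fst else if n = 4 then Snd else if n = 5 then Oracle
     else (let m = (n - 6) div 4; k = (n - 6) mod 4 in
       if k = 0 then Pair (decode (fst (prod_decode m))) (decode (snd (prod_decode m)))
       else if k = 1 then Comp (decode (fst (prod_decode m))) (decode (snd (prod_decode m)))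
       else if k = 2 then Rec (decode (fst (prod_decode m))) (decode (snd (prod_decode m)))
       else Mu (decode m)))"
  by auto
lemma decode_term_aux:
  assumes "\<not> n < 6"
  shows "fst (prod_decode ((n - 6) div 4)) < n" "snd (prod_decode ((n - 6) div 4)) < n"
    "(n - 6) div 4 < n"
proof -
  have m: "(n - 6) div 4 < n" using assms by linarith
  show "(n - 6) div 4 < n" by (rule m)
  show "fst (prod_decode ((n - 6) div 4)) < n"
    using prod_decode_le[of "(n - 6) div 4"] m by (cases "prod_decode ((n - 6) div 4)") auto
  show "snd (prod_decode ((n - 6) div 4)) < n"
    using prod_decode_le[of "(n - 6) div 4"] m by (cases "prod_decode ((n - 6) div 4)") auto
qed

termination
  by (relation "measure id") (auto simp: Let_def intro: decode_term_aux)

definition Phi :: "pfun \<Rightarrow> nat \<Rightarrow> pfun" where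
  "Phi \<alpha> e x = (if \<exists>v. eval \<alpha> (decode e) x v then Some (THE v. eval \<alpha> (decode e) x v) else None)"

definition chi :: "nat set \<Rightarrow> pfun" where
  "chi X n = Some (if n \<in> X then 1 else 0)"

definition computable_in :: "pfun \<Rightarrow> nat set \<Rightarrow> bool" where
  "computable_in f X \<longleftrightarrow> (\<exists>e. f = Phi (chi X) e)"

definition turing_le :: "nat set \<Rightarrow> nat set \<Rightarrow> bool" (infix "\<le>\<^sub>T" 50) where
  "X \<le>\<^sub>T Y \<longleftrightarrow> computable_in (chi X) Y"

definition jump :: "nat set \<Rightarrow> nat set" where
  "jump X = {e. Phi (chi X) e e \<noteq> None}"

definition join :: "pfun \<Rightarrow> pfun \<Rightarrow> pfun" where
  "join \<phi> \<psi> n = (if even n then \<phi> (n div 2) else \<psi> (n div 2))"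

definition pca_embedding ::
  "'a set \<Rightarrow> ('a \<Rightarrow> 'a \<Rightarrow> 'a option) \<Rightarrow> 'b set \<Rightarrow> ('b \<Rightarrow> 'b \<Rightarrow> 'b option) \<Rightarrow> ('a \<Rightarrow> 'b) \<Rightarrow> bool" where
  "pca_embedding A appA B appB f \<longleftrightarrow>
     f ` A \<subseteq> B \<and> inj_on f A \<and>
     (\<forall>a\<in>A. \<forall>b\<in>A. \<forall>c. appA a b = Some c \<longrightarrow> appB (f a) (f b) = Some (f c))"

definition K1_carrier :: "nat set" where "K1_carrier = UNIV"

definition K1_app :: "nat set \<Rightarrow> nat \<Rightarrow> nat \<Rightarrow> nat option" where
  "K1_app Y n m = Phi (chi Y) n m"

definition B_carrier :: "nat set \<Rightarrow> pfun set" where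
  "B_carrier X = {\<phi>. computable_in \<phi> X}"

definition B_app :: "pfun \<Rightarrow> pfun \<Rightarrow> pfun option" where
  "B_app \<phi> \<psi> = Some (\<lambda>n. case \<phi> 0 of None \<Rightarrow> None | Some e \<Rightarrow> Phi (join \<phi> \<psi>) e n)"

end

theory Submission
  imports Defs
begin

text \<open>
  If \<open>f\<close> embeds \<open>B\<^sup>X\<close> into \<open>K\<^sub>1\<^sup>Y\<close>, then \<open>n \<mapsto> f (\<lambda>x. n)\<close> is \<open>Y\<close>-computable, by iterating the
  image of a successor element. Moreover an element of \<open>B\<^sup>X\<close> maps \<open>\<lambda>x. e\<close> to a partial
  function \<open>\<theta>\<^sub>e\<close> that is total, namely \<open>\<lambda>x. 0\<close>, exactly if \<open>e \<notin> X''\<close>: \<open>\<theta>\<^sub>e(N, s\<^sub>0)\<close> searches for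
  a stage \<open>s \<ge> s\<^sub>0\<close> at which the computation of \<open>\<Phi>\<^sub>e(e)\<close> relative to the stage-\<open>s\<close> approximation
  of \<open>X'\<close> has not halted within \<open>N\<close> steps. By injectivity, \<open>e \<in> X''\<close> iff
  \<open>f \<theta>\<^sub>e \<noteq> f (\<lambda>x. 0)\<close>, which \<open>Y\<close> decides.

  Conversely, represent \<open>\<psi> \<in> B\<^sup>X\<close> by its least \<open>X\<close>-index. Inequality of \<open>X\<close>-indices is
  \<open>\<Sigma>\<^sub>2\<close> in \<open>X\<close>, hence decidable from \<open>X''\<close> and so from \<open>Y\<close>; therefore a \<open>Y\<close>-program can compute
  the least index of a product from the least indices of its factors. Coding least indices
  injectively into program indices by s-m-n gives the embedding.
\<close>

definition cpair :: "nat \<Rightarrow> nat \<Rightarrow> nat" where "cpair a b = prod_encode (a, b)"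
definition cfst :: "nat \<Rightarrow> nat" where "cfst x = fst (prod_decode x)"
definition csnd :: "nat \<Rightarrow> nat" where "csnd x = snd (prod_decode x)"

lemma cfst_cpair [simp]: "cfst (cpair a b) = a" by (simp add: cfst_def cpair_def)
lemma csnd_cpair [simp]: "csnd (cpair a b) = b" by (simp add: csnd_def cpair_def)
lemma cpair_cfst_csnd [simp]: "cpair (cfst x) (csnd x) = x" by (simp add: cpair_def cfst_def csnd_def)
lemma cpair_0_0 [simp]: "cpair 0 0 = 0" by (simp add: cpair_def prod_encode_def)
lemma cpair_eq_iff [simp]: "cpair a b = cpair c d \<longleftrightarrow> a = c \<and> b = d"
  by (simp add: cpair_def)

lemma eval_Zero [simp]: "eval \<alpha> Zero x v \<longleftrightarrow> v = 0"
  by (auto elim: eval.cases intro: eval.intros)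
lemma eval_Succ [simp]: "eval \<alpha> Succ x v \<longleftrightarrow> v = Suc x"
  by (auto elim: eval.cases intro: eval.intros)
lemma eval_Ident [simp]: "eval \<alpha> Ident x v \<longleftrightarrow> v = x"
  by (auto elim: eval.cases intro: eval.intros)
lemma eval_Fst [simp]: "eval \<alpha> Fst x v \<longleftrightarrow> v = cfst x"
  by (auto elim: eval.cases intro: eval.intros simp: cfst_def)
lemma eval_Snd [simp]: "eval \<alpha> Snd x v \<longleftrightarrow> v = csnd x"
  by (auto elim: eval.cases intro: eval.intros simp: csnd_def)
lemma eval_Oracle [simp]: "eval \<alpha> Oracle x v \<longleftrightarrow> \<alpha> x = Some v"
  by (auto elim: eval.cases intro: eval.intros)

lemma eval_Pair [simp]:
  "eval \<alpha> (Pair f g) x v \<longleftrightarrow> (\<exists>a b. v = cpair a b \<and> eval \<alpha> f x a \<and> eval \<alpha> g x b)"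
proof
  assume "eval \<alpha> (Pair f g) x v"
  then show "\<exists>a b. v = cpair a b \<and> eval \<alpha> f x a \<and> eval \<alpha> g x b"
    by (cases rule: eval.cases) (auto simp: cpair_def)
qed (auto simp: cpair_def intro: eval.ev_pair)

lemma eval_Comp [simp]: "eval \<alpha> (Comp f g) x v \<longleftrightarrow> (\<exists>y. eval \<alpha> g x y \<and> eval \<alpha> f y v)"
proof
  assume "eval \<alpha> (Comp f g) x v"
  then show "\<exists>y. eval \<alpha> g x y \<and> eval \<alpha> f y v"
    by (cases rule: eval.cases) auto
qed (auto intro: eval.ev_comp)

lemma eval_Rec_0 [simp]: "eval \<alpha> (Rec f g) (cpair 0 y) v \<longleftrightarrow> eval \<alpha> f y v"
proof
  assume "eval \<alpha> (Rec f g) (cpair 0 y) v"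
  then show "eval \<alpha> f y v"
    by (cases rule: eval.cases) (simp_all add: cpair_def)
qed (simp add: cpair_def eval.ev_rec0)

lemma eval_Rec_Suc [simp]:
  "eval \<alpha> (Rec f g) (cpair (Suc n) y) v \<longleftrightarrow>
     (\<exists>w. eval \<alpha> (Rec f g) (cpair n y) w \<and> eval \<alpha> g (cpair n (cpair w y)) v)"
proof
  assume "eval \<alpha> (Rec f g) (cpair (Suc n) y) v"
  then show "\<exists>w. eval \<alpha> (Rec f g) (cpair n y) w \<and> eval \<alpha> g (cpair n (cpair w y)) v"
    by (cases rule: eval.cases) (simp_all add: cpair_def, blast)
qed (auto simp: cpair_def intro: eval.ev_recS)

lemma eval_Mu:
  "eval \<alpha> (Mu f) x n \<longleftrightarrow>
     eval \<alpha> f (cpair n x) 0 \<and> (\<forall>i<n. \<exists>v. v \<noteq> 0 \<and> eval \<alpha> f (cpair i x) v)"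
proof
  assume "eval \<alpha> (Mu f) x n"
  then show "eval \<alpha> f (cpair n x) 0 \<and> (\<forall>i<n. \<exists>v. v \<noteq> 0 \<and> eval \<alpha> f (cpair i x) v)"
    by (cases rule: eval.cases) (simp_all add: cpair_def)
qed (simp add: cpair_def eval.ev_mu)

lemma eval_deterministic: "eval \<alpha> p x v \<Longrightarrow> eval \<alpha> p x w \<Longrightarrow> v = w"
proof (induction arbitrary: w rule: eval.induct)
  case (ev_pair f x a g b)
  from ev_pair.prems obtain a' b' where "w = cpair a' b'" "eval \<alpha> f x a'" "eval \<alpha> g x b'"
    by auto
  with ev_pair.IH show ?case by (simp add: cpair_def)
next
  case (ev_comp g x y f v)
  from ev_comp.prems obtain y' where "eval \<alpha> g x y'" "eval \<alpha> f y' w" by auto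
  with ev_comp.IH show ?case by metis
next
  case (ev_rec0 f y v g)
  from ev_rec0.prems have "eval \<alpha> f y w" by (simp add: cpair_def[symmetric])
  with ev_rec0.IH show ?case by metis
next
  case (ev_recS f g n y w' v)
  from ev_recS.prems obtain u where
    "eval \<alpha> (Rec f g) (cpair n y) u" "eval \<alpha> g (cpair n (cpair u y)) w"
    by (auto simp: cpair_def[symmetric])
  with ev_recS.IH show ?case by (metis cpair_def)
next
  case (ev_mu f n x)
  from ev_mu.prems have w0: "eval \<alpha> f (cpair w x) 0"
    and below_w: "\<forall>i<w. \<exists>v. v \<noteq> 0 \<and> eval \<alpha> f (cpair i x) v"
    by (auto simp: eval_Mu)
  show ?case
  proof (rule linorder_cases)
    assume "n < w"
    with below_w ev_mu.IH(1) show ?thesis by (metis cpair_def)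
  next
    assume "w < n"
    with w0 ev_mu.IH(2) show ?thesis by (metis cpair_def)
  qed
qed (simp_all add: cfst_def csnd_def)

lemma Phi_eq_Some_iff: "Phi \<alpha> e x = Some v \<longleftrightarrow> eval \<alpha> (decode e) x v"
proof
  assume "Phi \<alpha> e x = Some v"
  then have "\<exists>v. eval \<alpha> (decode e) x v" and "v = (THE v. eval \<alpha> (decode e) x v)"
    unfolding Phi_def by (auto split: if_splits)
  then show "eval \<alpha> (decode e) x v" using eval_deterministic by (metis theI')
next
  assume "eval \<alpha> (decode e) x v"
  moreover from this have "(THE v. eval \<alpha> (decode e) x v) = v"
    using eval_deterministic by blast
  ultimately show "Phi \<alpha> e x = Some v" unfolding Phi_def by auto
qed

lemma Phi_eq_None_iff: "Phi \<alpha> e x = None \<longleftrightarrow> (\<forall>v. \<not> eval \<alpha> (decode e) x v)"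
  unfolding Phi_def by auto

declare decode.simps [simp del]

lemma decode_basic [simp]:
  "decode 0 = Zero" "decode 1 = Succ" "decode (Suc 0) = Succ" "decode 2 = Ident"
  "decode 3 = Fst" "decode 4 = Snd" "decode 5 = Oracle"
  by (subst decode.simps; simp)+

lemma decode_compound:
  assumes "6 \<le> e"
  shows "decode e =
    (let m = (e - 6) div 4 in
     if (e - 6) mod 4 = 0 then Pair (decode (cfst m)) (decode (csnd m))
     else if (e - 6) mod 4 = 1 then Comp (decode (cfst m)) (decode (csnd m))
     else if (e - 6) mod 4 = 2 then Rec (decode (cfst m)) (decode (csnd m))
     else Mu (decode m))"
  using assms by (subst decode.simps) (simp add: Let_def cfst_def csnd_def)

lemma decode_compound_code:
  assumes "k < 4"
  shows "decode (6 + 4 * m + k) =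
   (if k = 0 then Pair (decode (cfst m)) (decode (csnd m))
    else if k = 1 then Comp (decode (cfst m)) (decode (csnd m))
    else if k = 2 then Rec (decode (cfst m)) (decode (csnd m))
    else Mu (decode m))"
proof -
  have "6 + 4 * m + k - 6 = k + 4 * m" "(k + 4 * m) div 4 = m" "(k + 4 * m) mod 4 = k"
    using assms by simp_all
  then show ?thesis
    by (subst decode_compound) (simp, simp only: Let_def)
qed

lemma decode_Pair_code [simp]: "decode (6 + 4 * m) = Pair (decode (cfst m)) (decode (csnd m))"
  using decode_compound_code[of 0 m] by simp
lemma decode_Comp_code [simp]: "decode (7 + 4 * m) = Comp (decode (cfst m)) (decode (csnd m))"
  using decode_compound_code[of 1 m] by (simp add: add.commute add.left_commute)
lemma decode_Rec_code [simp]: "decode (8 + 4 * m) = Rec (decode (cfst m)) (decode (csnd m))"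
  using decode_compound_code[of 2 m] by (simp add: add.commute add.left_commute)
lemma decode_Mu_code [simp]: "decode (9 + 4 * m) = Mu (decode m)"
  using decode_compound_code[of 3 m] by (simp add: add.commute add.left_commute)

lemma decode_eq_iff:
  "decode e = Zero \<longleftrightarrow> e = 0"
  "decode e = Succ \<longleftrightarrow> e = 1"
  "decode e = Ident \<longleftrightarrow> e = 2"
  "decode e = Fst \<longleftrightarrow> e = 3"
  "decode e = Snd \<longleftrightarrow> e = 4"
  "decode e = Oracle \<longleftrightarrow> e = 5"
  "decode e = Pair f g \<longleftrightarrow> 6 \<le> e \<and> (e - 6) mod 4 = 0 \<and>
     decode (cfst ((e - 6) div 4)) = f \<and> decode (csnd ((e - 6) div 4)) = g"
  "decode e = Comp f g \<longleftrightarrow> 6 \<le> e \<and> (e - 6) mod 4 = 1 \<and>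
     decode (cfst ((e - 6) div 4)) = f \<and> decode (csnd ((e - 6) div 4)) = g"
  "decode e = Rec f g \<longleftrightarrow> 6 \<le> e \<and> (e - 6) mod 4 = 2 \<and>
     decode (cfst ((e - 6) div 4)) = f \<and> decode (csnd ((e - 6) div 4)) = g"
  "decode e = Mu f \<longleftrightarrow> 6 \<le> e \<and> (e - 6) mod 4 = 3 \<and> decode ((e - 6) div 4) = f"
proof -
  have small: "e < 6 \<Longrightarrow> e = 0 \<or> e = 1 \<or> e = 2 \<or> e = 3 \<or> e = 4 \<or> e = 5" by auto
  have residue: "(e - 6) mod 4 = 0 \<or> (e - 6) mod 4 = 1 \<or> (e - 6) mod 4 = 2 \<or> (e - 6) mod 4 = 3"
    by auto
  show
    "decode e = Zero \<longleftrightarrow> e = 0"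
    "decode e = Succ \<longleftrightarrow> e = 1"
    "decode e = Ident \<longleftrightarrow> e = 2"
    "decode e = Fst \<longleftrightarrow> e = 3"
    "decode e = Snd \<longleftrightarrow> e = 4"
    "decode e = Oracle \<longleftrightarrow> e = 5"
    "decode e = Pair f g \<longleftrightarrow> 6 \<le> e \<and> (e - 6) mod 4 = 0 \<and>
       decode (cfst ((e - 6) div 4)) = f \<and> decode (csnd ((e - 6) div 4)) = g"
    "decode e = Comp f g \<longleftrightarrow> 6 \<le> e \<and> (e - 6) mod 4 = 1 \<and>
       decode (cfst ((e - 6) div 4)) = f \<and> decode (csnd ((e - 6) div 4)) = g"
    "decode e = Rec f g \<longleftrightarrow> 6 \<le> e \<and> (e - 6) mod 4 = 2 \<and>
       decode (cfst ((e - 6) div 4)) = f \<and> decode (csnd ((e - 6) div 4)) = g"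
    "decode e = Mu f \<longleftrightarrow> 6 \<le> e \<and> (e - 6) mod 4 = 3 \<and> decode ((e - 6) div 4) = f"
    by (cases "e < 6"; (use small in \<open>auto simp: decode_compound Let_def\<close>);
        use residue in \<open>auto simp: decode_compound Let_def\<close>)+
qed

primrec encode :: "prog \<Rightarrow> nat" where
  "encode Zero = 0" | "encode Succ = 1" | "encode Ident = 2" | "encode Fst = 3"
| "encode Snd = 4" | "encode Oracle = 5"
| "encode (Pair p q) = 6 + 4 * cpair (encode p) (encode q)"
| "encode (Comp p q) = 7 + 4 * cpair (encode p) (encode q)"
| "encode (Rec p q) = 8 + 4 * cpair (encode p) (encode q)"
| "encode (Mu p) = 9 + 4 * encode p"

lemma decode_encode [simp]: "decode (encode p) = p"
  by (induction p) simp_all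

primrec const_prog :: "nat \<Rightarrow> prog" where
  "const_prog 0 = Zero"
| "const_prog (Suc n) = Comp Succ (const_prog n)"

lemma eval_const_prog [simp]: "eval \<alpha> (const_prog n) x v \<longleftrightarrow> v = n"
  by (induction n arbitrary: v) auto

lemma const_prog_inject: "const_prog n = const_prog m \<Longrightarrow> n = m"
  by (induction n arbitrary: m) (case_tac m; simp)+

definition const_index :: "nat \<Rightarrow> nat" where "const_index n = encode (const_prog n)"

text \<open>\<open>smn e n\<close> encodes \<open>Comp (decode e) (Pair (const_prog n) Ident)\<close>.\<close>

definition smn :: "nat \<Rightarrow> nat \<Rightarrow> nat" where
  "smn e n = 7 + 4 * cpair e (6 + 4 * cpair (const_index n) 2)"

lemma Phi_smn: "Phi \<alpha> (smn e n) x = Phi \<alpha> e (cpair n x)"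
proof -
  have "decode (smn e n) = Comp (decode e) (Pair (const_prog n) Ident)"
    by (simp add: smn_def const_index_def)
  then have "eval \<alpha> (decode (smn e n)) x = eval \<alpha> (decode e) (cpair n x)"
    by (auto simp: fun_eq_iff)
  then show ?thesis unfolding Phi_def by simp
qed

lemma smn_fst_arg: "cfst ((smn e n - 7) div 4) = e"
  by (simp add: smn_def)

lemma const_index_inject: "const_index n = const_index m \<Longrightarrow> n = m"
  unfolding const_index_def by (metis decode_encode const_prog_inject)

lemma smn_inject: "smn e n = smn e' n' \<Longrightarrow> e = e' \<and> n = n'"
  unfolding smn_def using const_index_inject by auto

section \<open>Functionals computable uniformly in a total oracle\<close>

abbreviation oracle_of :: "(nat \<Rightarrow> nat) \<Rightarrow> pfun" where
  "oracle_of a \<equiv> \<lambda>n. Some (a n)"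

definition computable :: "((nat \<Rightarrow> nat) \<Rightarrow> nat \<Rightarrow> nat) \<Rightarrow> bool" where
  "computable h \<longleftrightarrow> (\<exists>p. \<forall>a x. eval (oracle_of a) p x (h a x))"

definition computable_pred :: "((nat \<Rightarrow> nat) \<Rightarrow> nat \<Rightarrow> bool) \<Rightarrow> bool" where
  "computable_pred P \<longleftrightarrow> computable (\<lambda>a x. if P a x then 1 else 0)"

named_theorems computable_intros

lemma computable_id [computable_intros]: "computable (\<lambda>a x. x)"
  unfolding computable_def by (rule exI[of _ Ident]) simp

lemma computable_const [computable_intros]: "computable (\<lambda>a x. c)"
  unfolding computable_def by (rule exI[of _ "const_prog c"]) simp

lemma computable_comp: "computable g \<Longrightarrow> computable h \<Longrightarrow> computable (\<lambda>a x. g a (h a x))"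
  unfolding computable_def by (metis eval_Comp)

lemma computable_cfst [computable_intros]: "computable h \<Longrightarrow> computable (\<lambda>a x. cfst (h a x))"
  unfolding computable_def by (metis eval_Comp eval_Fst)

lemma computable_csnd [computable_intros]: "computable h \<Longrightarrow> computable (\<lambda>a x. csnd (h a x))"
  unfolding computable_def by (metis eval_Comp eval_Snd)

lemma computable_Suc [computable_intros]: "computable h \<Longrightarrow> computable (\<lambda>a x. Suc (h a x))"
  unfolding computable_def by (metis eval_Comp eval_Succ)

lemma computable_oracle [computable_intros]: "computable h \<Longrightarrow> computable (\<lambda>a x. a (h a x))"
  unfolding computable_def by (metis eval_Comp eval_Oracle)

lemma computable_cpair [computable_intros]:
  "computable g \<Longrightarrow> computable h \<Longrightarrow> computable (\<lambda>a x. cpair (g a x) (h a x))"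
  unfolding computable_def by (metis eval_Pair)

primrec prim_rec :: "(nat \<Rightarrow> nat) \<Rightarrow> (nat \<Rightarrow> nat) \<Rightarrow> nat \<Rightarrow> nat \<Rightarrow> nat" where
  "prim_rec F G 0 y = F y"
| "prim_rec F G (Suc n) y = G (cpair n (cpair (prim_rec F G n y) y))"

lemma computable_prim_rec:
  assumes "computable F" "computable G" "computable N" "computable Y"
  shows "computable (\<lambda>a x. prim_rec (F a) (G a) (N a x) (Y a x))"
proof -
  obtain P Q where
    P: "\<And>a x. eval (oracle_of a) P x (F a x)" and Q: "\<And>a x. eval (oracle_of a) Q x (G a x)"
    using assms(1,2) unfolding computable_def by blast
  have "eval (oracle_of a) (Rec P Q) (cpair n y) (prim_rec (F a) (G a) n y)" for a n y
    by (induction n) (use P Q in auto)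
  then have "computable (\<lambda>a x. prim_rec (F a) (G a) (cfst x) (csnd x))"
    unfolding computable_def by (metis cpair_cfst_csnd)
  from computable_comp[OF this computable_cpair[OF assms(3,4)]] show ?thesis by simp
qed

lemma computable_add [computable_intros]:
  assumes "computable g" "computable h"
  shows "computable (\<lambda>a x. g a x + h a x)"
proof -
  have "prim_rec (\<lambda>y. y) (\<lambda>z. Suc (cfst (csnd z))) n y = n + y" for n y
    by (induction n) auto
  moreover have "computable (\<lambda>a x. prim_rec (\<lambda>y. y) (\<lambda>z. Suc (cfst (csnd z))) (g a x) (h a x))"
    by (rule computable_prim_rec[where F = "\<lambda>a y. y" and G = "\<lambda>a z. Suc (cfst (csnd z))"])
      (intro computable_intros assms)+
  ultimately show ?thesis by simp
qed

lemma computable_diff [computable_intros]: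
  assumes "computable g" "computable h"
  shows "computable (\<lambda>a x. g a x - h a x)"
proof -
  have "prim_rec (\<lambda>y. 0) cfst n y = n - 1" for n y
    by (induction n) auto
  moreover have "computable (\<lambda>a x. prim_rec (\<lambda>y. 0) cfst (k a x) 0)" if "computable k" for k
    by (rule computable_prim_rec[where F = "\<lambda>a y. 0" and G = "\<lambda>a. cfst"]) (intro computable_intros that)+
  ultimately have pred: "computable (\<lambda>a x. k a x - Suc 0)" if "computable k" for k
    using that by simp
  have "prim_rec (\<lambda>y. y) (\<lambda>z. cfst (csnd z) - Suc 0) n y = y - n" for n y
    by (induction n) auto
  moreover have "computable (\<lambda>a x. prim_rec (\<lambda>y. y) (\<lambda>z. cfst (csnd z) - Suc 0) (h a x) (g a x))"
    by (rule computable_prim_rec[where F = "\<lambda>a y. y" and G = "\<lambda>a z. cfst (csnd z) - Suc 0"])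
      (intro computable_intros pred assms)+
  ultimately show ?thesis by simp
qed

lemma computable_mult [computable_intros]:
  assumes "computable g" "computable h"
  shows "computable (\<lambda>a x. g a x * h a x)"
proof -
  have "prim_rec (\<lambda>y. 0) (\<lambda>z. cfst (csnd z) + csnd (csnd z)) n y = n * y" for n y
    by (induction n) auto
  moreover have
    "computable (\<lambda>a x. prim_rec (\<lambda>y. 0) (\<lambda>z. cfst (csnd z) + csnd (csnd z)) (g a x) (h a x))"
    by (rule computable_prim_rec[where F = "\<lambda>a y. 0" and G = "\<lambda>a z. cfst (csnd z) + csnd (csnd z)"])
      (intro computable_intros assms)+
  ultimately show ?thesis by simp
qed

lemma computable_if_zero:
  assumes "computable c" "computable g" "computable h"
  shows "computable (\<lambda>a x. if c a x = 0 then g a x else h a x)"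
proof -
  have "prim_rec cfst (\<lambda>z. csnd (csnd (csnd z))) n (cpair u w) = (if n = 0 then u else w)" for n u w
    by (cases n) auto
  moreover have
    "computable (\<lambda>a x. prim_rec cfst (\<lambda>z. csnd (csnd (csnd z))) (c a x) (cpair (g a x) (h a x)))"
    by (rule computable_prim_rec[where F = "\<lambda>a. cfst" and G = "\<lambda>a z. csnd (csnd (csnd z))"])
      (intro computable_intros assms)+
  ultimately show ?thesis by simp
qed

lemma computable_if [computable_intros]:
  assumes "computable_pred P" "computable g" "computable h"
  shows "computable (\<lambda>a x. if P a x then g a x else h a x)"
proof -
  have "computable (\<lambda>a x. if (if P a x then 1 else 0) = (0::nat) then h a x else g a x)"
    by (rule computable_if_zero) (use assms in \<open>auto simp: computable_pred_def\<close>)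
  moreover have "(\<lambda>a x. if (if P a x then 1 else 0) = (0::nat) then h a x else g a x) =
      (\<lambda>a x. if P a x then g a x else h a x)"
    by (simp add: fun_eq_iff)
  ultimately show ?thesis by simp
qed

lemma computable_pred_eq_0:
  assumes "computable h"
  shows "computable_pred (\<lambda>a x. h a x = 0)"
  unfolding computable_pred_def by (rule computable_if_zero) (intro computable_intros assms)+

lemma computable_pred_eq [computable_intros]:
  assumes "computable g" "computable h"
  shows "computable_pred (\<lambda>a x. g a x = h a x)"
proof -
  have "computable_pred (\<lambda>a x. (g a x - h a x) + (h a x - g a x) = 0)"
    by (rule computable_pred_eq_0) (intro computable_intros assms)+
  moreover have "(\<lambda>a x. (g a x - h a x) + (h a x - g a x) = 0) = (\<lambda>a x. g a x = h a x)"
    by (auto simp: fun_eq_iff)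
  ultimately show ?thesis by simp
qed

lemma computable_pred_conj [computable_intros]:
  assumes "computable_pred P" "computable_pred Q"
  shows "computable_pred (\<lambda>a x. P a x \<and> Q a x)"
proof -
  have "computable (\<lambda>a x. if P a x then (if Q a x then 1 else 0) else 0)"
    by (intro computable_if) (intro computable_intros assms)+
  moreover have "(\<lambda>a x. if P a x then (if Q a x then 1 else 0) else 0) =
      (\<lambda>a x. if P a x \<and> Q a x then 1 else (0::nat))"
    by (simp add: fun_eq_iff)
  ultimately show ?thesis unfolding computable_pred_def by simp
qed

lemma computable_divmod:
  assumes "0 < d" "computable h"
  shows "computable (\<lambda>a x. cpair (h a x div d) (h a x mod d))"
proof -
  define G where "G z = (if csnd (cfst (csnd z)) = d - 1 then cpair (Suc (cfst (cfst (csnd z)))) 0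
    else cpair (cfst (cfst (csnd z))) (Suc (csnd (cfst (csnd z)))))" for z
  have "prim_rec (\<lambda>y. 0) G n y = cpair (n div d) (n mod d)" for n y
  proof (induction n)
    case (Suc n)
    have "n mod d < d" using assms(1) by simp
    with Suc assms(1) show ?case by (auto simp: G_def div_Suc mod_Suc)
  qed simp
  moreover have "computable (\<lambda>a x. prim_rec (\<lambda>y. 0) G (h a x) 0)"
    unfolding G_def
    by (rule computable_prim_rec[where F = "\<lambda>a y. 0"]) (intro computable_intros assms(2))+
  ultimately show ?thesis by simp
qed

lemma computable_div [computable_intros]:
  "0 < d \<Longrightarrow> computable h \<Longrightarrow> computable (\<lambda>a x. h a x div d)"
  using computable_cfst[OF computable_divmod] by simp

lemma computable_mod [computable_intros]:
  "0 < d \<Longrightarrow> computable h \<Longrightarrow> computable (\<lambda>a x. h a x mod d)"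
  using computable_csnd[OF computable_divmod] by simp

lemma computable_const_index [computable_intros]:
  assumes "computable h"
  shows "computable (\<lambda>a x. const_index (h a x))"
proof -
  have "prim_rec (\<lambda>y. 0) (\<lambda>z. 7 + 4 * cpair 1 (cfst (csnd z))) n y = const_index n" for n y
    by (induction n) (simp_all add: const_index_def)
  moreover have "computable (\<lambda>a x. prim_rec (\<lambda>y. 0) (\<lambda>z. 7 + 4 * cpair 1 (cfst (csnd z))) (h a x) 0)"
    by (rule computable_prim_rec[where F = "\<lambda>a y. 0"]) (intro computable_intros assms)+
  ultimately show ?thesis by simp
qed

lemma computable_smn [computable_intros]:
  "computable E \<Longrightarrow> computable N \<Longrightarrow> computable (\<lambda>a x. smn (E a x) (N a x))"
  unfolding smn_def by (intro computable_intros)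

definition pcomputable :: "((nat \<Rightarrow> nat) \<Rightarrow> nat \<Rightarrow> nat option) \<Rightarrow> bool" where
  "pcomputable g \<longleftrightarrow> (\<exists>p. \<forall>a x v. eval (oracle_of a) p x v \<longleftrightarrow> g a x = Some v)"

lemma computable_imp_prog: "computable h \<Longrightarrow> \<exists>p. \<forall>a x v. eval (oracle_of a) p x v \<longleftrightarrow> v = h a x"
  unfolding computable_def using eval_deterministic by blast

lemma pcomputable_Some:
  assumes "computable h"
  shows "pcomputable (\<lambda>a x. Some (h a x))"
proof -
  obtain p where "\<forall>a x v. eval (oracle_of a) p x v \<longleftrightarrow> v = h a x"
    using computable_imp_prog[OF assms] by blast
  then show ?thesis unfolding pcomputable_def by (metis option.inject)
qed

lemma pcomputable_bind:
  assumes "pcomputable g" "pcomputable h"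
  shows "pcomputable (\<lambda>a x. case g a x of None \<Rightarrow> None | Some v \<Rightarrow> h a (cpair v x))"
proof -
  obtain G H where
    G: "\<And>a x v. eval (oracle_of a) G x v \<longleftrightarrow> g a x = Some v" and
    H: "\<And>a x v. eval (oracle_of a) H x v \<longleftrightarrow> h a x = Some v"
    using assms unfolding pcomputable_def by blast
  have "eval (oracle_of a) (Comp H (Pair G Ident)) x v \<longleftrightarrow>
      (case g a x of None \<Rightarrow> None | Some u \<Rightarrow> h a (cpair u x)) = Some v" for a x v
    by (auto simp: G H split: option.splits)
  then show ?thesis unfolding pcomputable_def by blast
qed

lemma pcomputable_comp:
  assumes "pcomputable g" "computable h"
  shows "pcomputable (\<lambda>a x. g a (h a x))"
proof -
  obtain G H where
    G: "\<And>a x v. eval (oracle_of a) G x v \<longleftrightarrow> g a x = Some v" and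
    H: "\<And>a x v. eval (oracle_of a) H x v \<longleftrightarrow> v = h a x"
    using assms(1) computable_imp_prog[OF assms(2)] unfolding pcomputable_def by blast
  have "eval (oracle_of a) (Comp G H) x v \<longleftrightarrow> g a (h a x) = Some v" for a x v
    by (simp add: G H)
  then show ?thesis unfolding pcomputable_def by blast
qed

lemma pcomputable_map:
  assumes "pcomputable g" "computable h"
  shows "pcomputable (\<lambda>a x. map_option (\<lambda>v. h a (cpair v x)) (g a x))"
proof -
  have "pcomputable (\<lambda>a x. case g a x of None \<Rightarrow> None | Some v \<Rightarrow> Some (h a (cpair v x)))"
    by (rule pcomputable_bind[OF assms(1) pcomputable_Some[OF assms(2)]])
  moreover have "(\<lambda>a x. case g a x of None \<Rightarrow> None | Some v \<Rightarrow> Some (h a (cpair v x))) =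
      (\<lambda>a x. map_option (\<lambda>v. h a (cpair v x)) (g a x))"
    by (simp add: fun_eq_iff split: option.split)
  ultimately show ?thesis by simp
qed

lemma pcomputable_Least:
  assumes "computable h"
  shows "pcomputable (\<lambda>a x. if \<exists>n. h a (cpair n x) = 0 then Some (LEAST n. h a (cpair n x) = 0) else None)"
    (is "pcomputable ?g")
proof -
  obtain H where H: "\<And>a x v. eval (oracle_of a) H x v \<longleftrightarrow> v = h a x"
    using computable_imp_prog[OF assms] by blast
  have "eval (oracle_of a) (Mu H) x v \<longleftrightarrow> ?g a x = Some v" for a x v
  proof -
    have "eval (oracle_of a) (Mu H) x v \<longleftrightarrow> h a (cpair v x) = 0 \<and> (\<forall>i<v. h a (cpair i x) \<noteq> 0)"
      by (auto simp: eval_Mu H)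
    also have "\<dots> \<longleftrightarrow> ?g a x = Some v"
    proof
      assume v: "h a (cpair v x) = 0 \<and> (\<forall>i<v. h a (cpair i x) \<noteq> 0)"
      then have "(LEAST n. h a (cpair n x) = 0) = v"
        by (intro Least_equality) (auto simp: not_less[symmetric])
      with v show "?g a x = Some v" by auto
    next
      assume "?g a x = Some v"
      then have ex: "\<exists>n. h a (cpair n x) = 0" and v: "v = (LEAST n. h a (cpair n x) = 0)"
        by (auto split: if_splits)
      show "h a (cpair v x) = 0 \<and> (\<forall>i<v. h a (cpair i x) \<noteq> 0)"
        using LeastI_ex[OF ex] not_less_Least v by auto
    qed
    finally show ?thesis .
  qed
  then show ?thesis unfolding pcomputable_def by blast
qed

lemma pcomputable_if_zero:
  assumes "computable c" "computable h" "pcomputable g"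
  shows "pcomputable (\<lambda>a x. if c a x = 0 then Some (h a x) else g a x)"
proof -
  have "computable (\<lambda>a x. if c a x = 0 then 0 else 1)"
    by (intro computable_if_zero assms computable_intros)
  then obtain C where C: "\<And>a x v. eval (oracle_of a) C x v \<longleftrightarrow> v = (if c a x = 0 then 0 else 1)"
    using computable_imp_prog by blast
  obtain H where H: "\<And>a x v. eval (oracle_of a) H x v \<longleftrightarrow> v = h a x"
    using computable_imp_prog[OF assms(2)] by blast
  obtain G where G: "\<And>a x v. eval (oracle_of a) G x v \<longleftrightarrow> g a x = Some v"
    using assms(3) unfolding pcomputable_def by blast
  \<comment> \<open>a recursion of depth \<open>0\<close> or \<open>1\<close> selects the branch\<close>
  let ?R = "Rec H (Comp G (Comp Snd Snd))"
  have R: "eval (oracle_of a) ?R (cpair k x) v \<longleftrightarrow> (if k = 0 then Some (h a x) else g a x) = Some v"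
    if "k = 0 \<or> k = 1" for a k x v
    using that by (auto simp: H G)
  have "eval (oracle_of a) (Comp ?R (Pair C Ident)) x v \<longleftrightarrow>
      eval (oracle_of a) ?R (cpair (if c a x = 0 then 0 else 1) x) v" for a x v
    by (auto simp: C)
  also have "\<dots> a x v \<longleftrightarrow> (if c a x = 0 then Some (h a x) else g a x) = Some v" for a x v
    by (subst R) auto
  finally show ?thesis unfolding pcomputable_def by blast
qed

lemma pcomputable_Phi: "pcomputable (\<lambda>a x. Phi (oracle_of a) e x)"
  unfolding pcomputable_def by (rule exI[of _ "decode e"]) (simp add: Phi_eq_Some_iff)

definition index_of :: "((nat \<Rightarrow> nat) \<Rightarrow> nat \<Rightarrow> nat option) \<Rightarrow> nat" where
  "index_of g = (SOME e. \<forall>a x. Phi (oracle_of a) e x = g a x)"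

lemma Phi_index_of:
  assumes "pcomputable g"
  shows "Phi (oracle_of a) (index_of g) x = g a x"
proof -
  obtain G where G: "\<And>a x v. eval (oracle_of a) G x v \<longleftrightarrow> g a x = Some v"
    using assms unfolding pcomputable_def by blast
  have "Phi (oracle_of a) (encode G) x = g a x" for a x
    by (cases "g a x") (auto simp: Phi_eq_None_iff Phi_eq_Some_iff G)
  then have "\<exists>e. \<forall>a x. Phi (oracle_of a) e x = g a x" by blast
  then have "\<forall>a x. Phi (oracle_of a) (index_of g) x = g a x"
    unfolding index_of_def by (rule someI_ex)
  then show ?thesis by blast
qed

definition mu_root :: "((nat \<Rightarrow> nat) \<Rightarrow> nat \<Rightarrow> nat option) \<Rightarrow> (nat \<Rightarrow> nat) \<Rightarrow> nat \<Rightarrow> nat \<Rightarrow> bool" where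
  "mu_root g a x n \<longleftrightarrow> g a (cpair n x) = Some 0 \<and> (\<forall>i<n. \<exists>v. v \<noteq> 0 \<and> g a (cpair i x) = Some v)"

definition partial_mu :: "((nat \<Rightarrow> nat) \<Rightarrow> nat \<Rightarrow> nat option) \<Rightarrow> (nat \<Rightarrow> nat) \<Rightarrow> nat \<Rightarrow> nat option" where
  "partial_mu g a x = (if \<exists>n. mu_root g a x n then Some (THE n. mu_root g a x n) else None)"

lemma mu_root_unique:
  assumes "mu_root g a x n" "mu_root g a x m"
  shows "n = m"
proof (rule ccontr)
  assume "n \<noteq> m"
  then consider "n < m" | "m < n" by linarith
  then show False
  proof cases
    case 1
    with assms obtain v where "v \<noteq> 0" "g a (cpair n x) = Some v"
      unfolding mu_root_def by blast
    with assms(1) show False unfolding mu_root_def by simp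
  next
    case 2
    with assms obtain v where "v \<noteq> 0" "g a (cpair m x) = Some v"
      unfolding mu_root_def by blast
    with assms(2) show False unfolding mu_root_def by simp
  qed
qed

lemma partial_mu_eq_Some_iff: "partial_mu g a x = Some n \<longleftrightarrow> mu_root g a x n"
proof
  assume n: "partial_mu g a x = Some n"
  then have ex: "\<exists>n. mu_root g a x n"
    unfolding partial_mu_def by (metis option.distinct(1))
  with n have "(THE n. mu_root g a x n) = n"
    unfolding partial_mu_def by simp
  moreover obtain m where m: "mu_root g a x m" using ex by blast
  then have "(THE n. mu_root g a x n) = m"
    by (rule the_equality) (rule mu_root_unique[OF _ m])
  ultimately show "mu_root g a x n" using m by simp
next
  assume n: "mu_root g a x n"
  then have "(THE n. mu_root g a x n) = n"
    by (rule the_equality) (rule mu_root_unique[OF _ n])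
  with n show "partial_mu g a x = Some n"
    unfolding partial_mu_def by (simp add: exI[of _ n])
qed

lemma pcomputable_partial_mu:
  assumes "pcomputable g"
  shows "pcomputable (partial_mu g)"
proof -
  obtain G where G: "\<And>a x v. eval (oracle_of a) G x v \<longleftrightarrow> g a x = Some v"
    using assms unfolding pcomputable_def by blast
  have "eval (oracle_of a) (Mu G) x n \<longleftrightarrow> partial_mu g a x = Some n" for a x n
    by (simp add: eval_Mu G partial_mu_eq_Some_iff mu_root_def)
  then show ?thesis unfolding pcomputable_def by blast
qed

lemma partial_mu_Least:
  assumes "\<And>i. g a (cpair i x) = Some (if P i then 0 else 1)" and "P k"
  shows "partial_mu g a x = Some (LEAST i. P i)"
proof -
  have "P (LEAST i. P i)" using assms(2) by (rule LeastI)
  then have "g a (cpair (LEAST i. P i) x) = Some 0" using assms(1) by simp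
  moreover have "\<exists>v. v \<noteq> 0 \<and> g a (cpair i x) = Some v" if "i < (LEAST i. P i)" for i
    using assms(1)[of i] not_less_Least[OF that] by (intro exI[of _ 1]) simp
  ultimately show ?thesis
    unfolding partial_mu_eq_Some_iff mu_root_def by blast
qed

definition chr :: "nat set \<Rightarrow> nat \<Rightarrow> nat" where "chr X n = (if n \<in> X then 1 else 0)"

lemma chi_chr: "chi X = oracle_of (chr X)"
  by (simp add: fun_eq_iff chi_def chr_def)

section \<open>A stack machine evaluating programs\<close>

text \<open>A state \<open>cpair c K\<close> pairs a configuration \<open>c\<close> -- a pending call of the program
  with index \<open>e\<close> on input \<open>x\<close>, or a returned value -- with a stack \<open>K\<close> of frames that say
  what to do with returned values. Calls carry a level \<open>l\<close>: at level \<open>0\<close> oracle queries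
  are answered by the oracle \<open>a\<close>, at any other level by running program \<open>oc\<close> at level \<open>0\<close>.
  So one machine evaluates relative to \<open>a\<close> and relative to \<open>\<Phi>\<^sup>a\<^sub>o\<^sub>c\<close>.\<close>

definition call :: "nat \<Rightarrow> nat \<Rightarrow> nat \<Rightarrow> nat \<Rightarrow> nat" where
  "call l e x K = cpair (cpair 0 (cpair l (cpair e x))) K"
definition ret :: "nat \<Rightarrow> nat \<Rightarrow> nat" where
  "ret v K = cpair (cpair 1 v) K"
definition push :: "nat \<Rightarrow> nat \<Rightarrow> nat" where
  "push fr K = Suc (cpair fr K)"

definition fr_pair1 :: "nat \<Rightarrow> nat \<Rightarrow> nat \<Rightarrow> nat" where
  "fr_pair1 l g x = cpair 0 (cpair l (cpair g x))"
definition fr_pair2 :: "nat \<Rightarrow> nat" where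
  "fr_pair2 v = cpair 1 v"
definition fr_comp :: "nat \<Rightarrow> nat \<Rightarrow> nat" where
  "fr_comp l f = cpair 2 (cpair l f)"
definition fr_rec :: "nat \<Rightarrow> nat \<Rightarrow> nat \<Rightarrow> nat \<Rightarrow> nat" where
  "fr_rec l g n y = cpair 3 (cpair l (cpair g (cpair n y)))"
definition fr_mu :: "nat \<Rightarrow> nat \<Rightarrow> nat \<Rightarrow> nat \<Rightarrow> nat" where
  "fr_mu l f i x = cpair 4 (cpair l (cpair f (cpair i x)))"

lemmas machine_defs = call_def ret_def push_def fr_pair1_def fr_pair2_def fr_comp_def fr_rec_def fr_mu_def

text \<open>Taking the oracle's answer \<open>ans\<close> as an argument keeps the step function oracle-free.\<close>

definition step_ans :: "nat \<Rightarrow> nat \<Rightarrow> nat \<Rightarrow> nat" where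
  "step_ans ans oc s = (let c = cfst s; K = csnd s in
    if cfst c = 0 then
      (let l = cfst (csnd c); e = cfst (csnd (csnd c)); x = csnd (csnd (csnd c));
           m = (e - 6) div 4; k = (e - 6) mod 4 in
       if e = 0 then ret 0 K
       else if e = 1 then ret (Suc x) K
       else if e = 2 then ret x K
       else if e = 3 then ret (cfst x) K
       else if e = 4 then ret (csnd x) K
       else if e = 5 then (if l = 0 then ret ans K else call 0 oc x K)
       else if k = 0 then call l (cfst m) x (push (fr_pair1 l (csnd m) x) K)
       else if k = 1 then call l (csnd m) x (push (fr_comp l (cfst m)) K)
       else if k = 2 then
         (if cfst x = 0 then call l (cfst m) (csnd x) K
          else call l e (cpair (cfst x - 1) (csnd x)) (push (fr_rec l (csnd m) (cfst x - 1) (csnd x)) K))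
       else call l m (cpair 0 x) (push (fr_mu l m 0 x) K))
    else
      (let v = csnd c; fr = cfst (K - 1); K' = csnd (K - 1); t = cfst fr; d = csnd fr in
       if K = 0 then s
       else if t = 0 then call (cfst d) (cfst (csnd d)) (csnd (csnd d)) (push (fr_pair2 v) K')
       else if t = 1 then ret (cpair d v) K'
       else if t = 2 then call (cfst d) (csnd d) v K'
       else if t = 3 then
         call (cfst d) (cfst (csnd d)) (cpair (cfst (csnd (csnd d))) (cpair v (csnd (csnd (csnd d))))) K'
       else if v = 0 then ret (cfst (csnd (csnd d))) K'
       else call (cfst d) (cfst (csnd d)) (cpair (Suc (cfst (csnd (csnd d)))) (csnd (csnd (csnd d))))
              (push (fr_mu (cfst d) (cfst (csnd d)) (Suc (cfst (csnd (csnd d)))) (csnd (csnd (csnd d)))) K')))"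

definition is_query :: "nat \<Rightarrow> bool" where
  "is_query s \<longleftrightarrow> cfst (cfst s) = 0 \<and> cfst (csnd (cfst s)) = 0 \<and> cfst (csnd (csnd (cfst s))) = 5"

definition query :: "nat \<Rightarrow> nat" where
  "query s = csnd (csnd (csnd (cfst s)))"

lemma step_ans_no_query: "\<not> is_query s \<Longrightarrow> step_ans ans oc s = step_ans ans' oc s"
  unfolding step_ans_def is_query_def Let_def by auto

definition step :: "(nat \<Rightarrow> nat) \<Rightarrow> nat \<Rightarrow> nat \<Rightarrow> nat" where
  "step a oc s = step_ans (a (query s)) oc s"

definition run :: "(nat \<Rightarrow> nat) \<Rightarrow> nat \<Rightarrow> nat \<Rightarrow> nat \<Rightarrow> nat" where
  "run a oc n s = (step a oc ^^ n) s"

lemma run_0 [simp]: "run a oc 0 s = s"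
  by (simp add: run_def)

lemma run_Suc: "run a oc (Suc n) s = run a oc n (step a oc s)"
  by (simp add: run_def funpow_swap1)

lemma run_Suc_outer: "run a oc (Suc n) s = step a oc (run a oc n s)"
  by (simp add: run_def)

lemma run_add: "run a oc (m + n) s = run a oc n (run a oc m s)"
  unfolding run_def by (metis add.commute comp_apply funpow_add)

lemma step_call_basic [simp]:
  "step a oc (call l 0 x K) = ret 0 K"
  "step a oc (call l (Suc 0) x K) = ret (Suc x) K"
  "step a oc (call l 2 x K) = ret x K"
  "step a oc (call l 3 x K) = ret (cfst x) K"
  "step a oc (call l 4 x K) = ret (csnd x) K"
  "step a oc (call 0 5 x K) = ret (a x) K"
  "l \<noteq> 0 \<Longrightarrow> step a oc (call l 5 x K) = call 0 oc x K"
  by (simp_all add: step_def step_ans_def call_def query_def)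

lemma step_call_compound:
  assumes "6 \<le> e"
  defines "m \<equiv> (e - 6) div 4"
  shows "(e - 6) mod 4 = 0 \<Longrightarrow> step a oc (call l e x K) = call l (cfst m) x (push (fr_pair1 l (csnd m) x) K)"
    and "(e - 6) mod 4 = 1 \<Longrightarrow> step a oc (call l e x K) = call l (csnd m) x (push (fr_comp l (cfst m)) K)"
    and "(e - 6) mod 4 = 2 \<Longrightarrow> step a oc (call l e (cpair 0 y) K) = call l (cfst m) y K"
    and "(e - 6) mod 4 = 2 \<Longrightarrow>
      step a oc (call l e (cpair (Suc n) y) K) = call l e (cpair n y) (push (fr_rec l (csnd m) n y) K)"
    and "(e - 6) mod 4 = 3 \<Longrightarrow> step a oc (call l e x K) = call l m (cpair 0 x) (push (fr_mu l m 0 x) K)"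
  using assms by (simp_all add: step_def step_ans_def call_def Let_def)

lemma step_ret [simp]:
  "step a oc (ret v 0) = ret v 0"
  "step a oc (ret v (push (fr_pair1 l g x) K)) = call l g x (push (fr_pair2 v) K)"
  "step a oc (ret w (push (fr_pair2 v) K)) = ret (cpair v w) K"
  "step a oc (ret y (push (fr_comp l f) K)) = call l f y K"
  "step a oc (ret w (push (fr_rec l g n y) K)) = call l g (cpair n (cpair w y)) K"
  "step a oc (ret 0 (push (fr_mu l f i x) K)) = ret i K"
  "v \<noteq> 0 \<Longrightarrow> step a oc (ret v (push (fr_mu l f i x) K)) =
     call l f (cpair (Suc i) x) (push (fr_mu l f (Suc i) x) K)"
  by (simp_all add: step_def step_ans_def machine_defs)

lemma call_neq_ret [simp]: "call l e x K \<noteq> ret v K'"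
  by (simp add: call_def ret_def)

lemma ret_push_neq_ret_0 [simp]: "ret v (push fr K) \<noteq> ret r 0"
  by (simp add: ret_def push_def)

lemma run_ret_0 [simp]: "run a oc n (ret v 0) = ret v 0"
  by (induction n) (simp_all add: run_Suc)

definition level_oracle :: "(nat \<Rightarrow> nat) \<Rightarrow> nat \<Rightarrow> nat \<Rightarrow> pfun" where
  "level_oracle a oc l = (if l = 0 then oracle_of a else Phi (oracle_of a) oc)"

definition reaches :: "(nat \<Rightarrow> nat) \<Rightarrow> nat \<Rightarrow> nat \<Rightarrow> nat \<Rightarrow> bool" where
  "reaches a oc s t \<longleftrightarrow> (\<exists>n. run a oc n s = t)"

lemma reaches_trans [trans]: "reaches a oc s t \<Longrightarrow> reaches a oc t u \<Longrightarrow> reaches a oc s u"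
  unfolding reaches_def by (metis run_add)

lemma reaches_step: "step a oc s = t \<Longrightarrow> reaches a oc s t"
  unfolding reaches_def by (metis run_0 run_Suc)

lemma reaches_ret_0_unique: "reaches a oc s (ret v 0) \<Longrightarrow> reaches a oc s (ret w 0) \<Longrightarrow> v = w"
  unfolding reaches_def by (metis le_add_diff_inverse nat_le_linear run_add run_ret_0 ret_def cpair_eq_iff)

lemma reaches_search_loop:
  assumes found: "reaches a oc (call l m (cpair n x) (push (fr_mu l m n x) K)) (ret 0 (push (fr_mu l m n x) K))"
    and passed: "\<And>i. i < n \<Longrightarrow> \<exists>v. v \<noteq> 0 \<and>
      reaches a oc (call l m (cpair i x) (push (fr_mu l m i x) K)) (ret v (push (fr_mu l m i x) K))"
    and "i \<le> n"
  shows "reaches a oc (call l m (cpair i x) (push (fr_mu l m i x) K)) (ret n K)"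
  using \<open>i \<le> n\<close>
proof (induction "n - i" arbitrary: i)
  case 0
  then have "i = n" by simp
  with found have "reaches a oc (call l m (cpair i x) (push (fr_mu l m i x) K)) (ret 0 (push (fr_mu l m i x) K))"
    by simp
  also have "reaches a oc \<dots> (ret n K)"
    using \<open>i = n\<close> by (simp add: reaches_step)
  finally show ?case .
next
  case (Suc d)
  then have "i < n" by simp
  with passed obtain v where "v \<noteq> 0"
    and "reaches a oc (call l m (cpair i x) (push (fr_mu l m i x) K)) (ret v (push (fr_mu l m i x) K))"
    by blast
  note this(2)
  also have "reaches a oc \<dots> (call l m (cpair (Suc i) x) (push (fr_mu l m (Suc i) x) K))"
    using \<open>v \<noteq> 0\<close> by (simp add: reaches_step)
  also have "reaches a oc \<dots> (ret n K)"
    using Suc.hyps(1)[of "Suc i"] Suc.hyps(2) \<open>i < n\<close> by simp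
  finally show ?case .
qed

lemma eval_imp_reaches:
  assumes "eval \<alpha> p x v"
    and oracle_step: "\<And>y w K. \<alpha> y = Some w \<Longrightarrow> reaches a oc (call l 5 y K) (ret w K)"
  shows "decode e = p \<Longrightarrow> reaches a oc (call l e x K) (ret v K)"
  using assms(1)
proof (induction arbitrary: e K rule: eval.induct)
  case (ev_oracle x v)
  then show ?case by (simp add: decode_eq_iff oracle_step)
next
  case (ev_pair f x v1 g v2)
  define m where "m = (e - 6) div 4"
  have e: "6 \<le> e" "(e - 6) mod 4 = 0" "decode (cfst m) = f" "decode (csnd m) = g"
    using ev_pair.prems by (auto simp: decode_eq_iff m_def)
  have "reaches a oc (call l e x K) (call l (cfst m) x (push (fr_pair1 l (csnd m) x) K))"
    using e by (auto simp: m_def step_call_compound intro: reaches_step)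
  also have "reaches a oc \<dots> (ret v1 (push (fr_pair1 l (csnd m) x) K))"
    using ev_pair.IH(1) e by blast
  also have "reaches a oc \<dots> (call l (csnd m) x (push (fr_pair2 v1) K))"
    by (simp add: reaches_step)
  also have "reaches a oc \<dots> (ret v2 (push (fr_pair2 v1) K))"
    using ev_pair.IH(2) e by blast
  also have "reaches a oc \<dots> (ret (cpair v1 v2) K)"
    by (simp add: reaches_step)
  finally show ?case by (simp add: cpair_def)
next
  case (ev_comp g x y f v)
  define m where "m = (e - 6) div 4"
  have e: "6 \<le> e" "(e - 6) mod 4 = 1" "decode (cfst m) = f" "decode (csnd m) = g"
    using ev_comp.prems by (auto simp: decode_eq_iff m_def)
  have "reaches a oc (call l e x K) (call l (csnd m) x (push (fr_comp l (cfst m)) K))"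
    using e by (auto simp: m_def step_call_compound intro: reaches_step)
  also have "reaches a oc \<dots> (ret y (push (fr_comp l (cfst m)) K))"
    using ev_comp.IH(1) e by blast
  also have "reaches a oc \<dots> (call l (cfst m) y K)"
    by (simp add: reaches_step)
  also have "reaches a oc \<dots> (ret v K)"
    using ev_comp.IH(2) e by blast
  finally show ?case .
next
  case (ev_rec0 f y v g)
  define m where "m = (e - 6) div 4"
  have e: "6 \<le> e" "(e - 6) mod 4 = 2" "decode (cfst m) = f"
    using ev_rec0.prems by (auto simp: decode_eq_iff m_def)
  have "reaches a oc (call l e (cpair 0 y) K) (call l (cfst m) y K)"
    using e by (auto simp: m_def step_call_compound intro: reaches_step)
  also have "reaches a oc \<dots> (ret v K)"
    using ev_rec0.IH e by blast
  finally show ?case by (simp add: cpair_def)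
next
  case (ev_recS f g n y w v)
  define m where "m = (e - 6) div 4"
  have e: "6 \<le> e" "(e - 6) mod 4 = 2" "decode (csnd m) = g"
    using ev_recS.prems by (auto simp: decode_eq_iff m_def)
  have "reaches a oc (call l e (cpair (Suc n) y) K) (call l e (cpair n y) (push (fr_rec l (csnd m) n y) K))"
    using e by (auto simp: m_def step_call_compound intro: reaches_step)
  also have "reaches a oc \<dots> (ret w (push (fr_rec l (csnd m) n y) K))"
    using ev_recS.IH(1) ev_recS.prems by (simp add: cpair_def)
  also have "reaches a oc \<dots> (call l (csnd m) (cpair n (cpair w y)) K)"
    by (simp add: reaches_step)
  also have "reaches a oc \<dots> (ret v K)"
    using ev_recS.IH(2) e by (simp add: cpair_def)
  finally show ?case by (simp add: cpair_def)
next
  case (ev_mu f n x)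
  define m where "m = (e - 6) div 4"
  have e: "6 \<le> e" "(e - 6) mod 4 = 3" "decode m = f"
    using ev_mu.prems by (auto simp: decode_eq_iff m_def)
  have "reaches a oc (call l e x K) (call l m (cpair 0 x) (push (fr_mu l m 0 x) K))"
    using e by (auto simp: m_def step_call_compound intro: reaches_step)
  also have "reaches a oc \<dots> (ret n K)"
  proof (rule reaches_search_loop)
    show "reaches a oc (call l m (cpair n x) (push (fr_mu l m n x) K)) (ret 0 (push (fr_mu l m n x) K))"
      using ev_mu.IH(1) e by (simp add: cpair_def)
  next
    fix i
    assume "i < n"
    with ev_mu.IH(2) obtain v where "v \<noteq> 0"
      and "\<And>e K. decode e = f \<Longrightarrow> reaches a oc (call l e (cpair i x) K) (ret v K)"
      by (auto simp: cpair_def)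
    with e show "\<exists>v. v \<noteq> 0 \<and>
        reaches a oc (call l m (cpair i x) (push (fr_mu l m i x) K)) (ret v (push (fr_mu l m i x) K))"
      by blast
  qed simp
  finally show ?case .
qed (auto simp: decode_eq_iff cfst_def csnd_def intro: reaches_step)

lemma eval_level_oracle_imp_reaches:
  assumes "eval (level_oracle a oc l) (decode e) x v"
  shows "reaches a oc (call l e x K) (ret v K)"
proof -
  have level_0: "reaches a oc (call 0 e x K) (ret v K)" if "eval (oracle_of a) (decode e) x v" for e x v K
    using eval_imp_reaches[OF that] by (simp add: reaches_step)
  have "reaches a oc (call l 5 y K) (ret w K)" if "level_oracle a oc l y = Some w" for y w K
  proof (cases "l = 0")
    case False
    have "reaches a oc (call l 5 y K) (call 0 oc y K)"
      using False by (simp add: reaches_step)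
    also have "reaches a oc \<dots> (ret w K)"
      using False that by (simp add: level_oracle_def Phi_eq_Some_iff level_0)
    finally show ?thesis .
  qed (use that in \<open>simp add: level_oracle_def reaches_step\<close>)
  then show ?thesis using eval_imp_reaches[OF assms] by blast
qed

lemma run_split:
  assumes "run a oc n s = ret r 0" "run a oc m s = t" "t \<noteq> ret r 0"
  obtains k where "n = m + Suc k" "run a oc k (step a oc t) = ret r 0"
proof -
  have "m < n"
  proof (rule ccontr)
    assume "\<not> m < n"
    then have "run a oc m s = run a oc (m - n) (ret r 0)"
      using assms(1) run_add[of a oc n "m - n" s] by simp
    with assms(2,3) show False by simp
  qed
  then obtain k where k: "n = m + Suc k"
    using less_imp_Suc_add by fastforce
  moreover have "run a oc k (step a oc t) = ret r 0"
    using assms(1,2) run_add[of a oc m "Suc k" s] k by (simp add: run_Suc)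
  ultimately show ?thesis using that by blast
qed

lemma run_call_first_step:
  assumes "run a oc n (call l e x K) = ret r 0"
  obtains k where "k < n" "run a oc k (step a oc (call l e x K)) = ret r 0"
proof -
  obtain k where "n = 0 + Suc k" "run a oc k (step a oc (call l e x K)) = ret r 0"
    using run_split[OF assms run_0 call_neq_ret] .
  with that[of k] show ?thesis by simp
qed

text \<open>Soundness is proved by induction on the length \<open>n\<close> of a halting run, simultaneously
  for calls and for the search loop of \<open>Mu\<close>.\<close>

definition call_sound :: "(nat \<Rightarrow> nat) \<Rightarrow> nat \<Rightarrow> nat \<Rightarrow> nat \<Rightarrow> bool" where
  "call_sound a oc r n \<longleftrightarrow> (\<forall>l e x K. run a oc n (call l e x K) = ret r 0 \<longrightarrow>
     (\<exists>v. reaches a oc (call l e x K) (ret v K) \<and> eval (level_oracle a oc l) (decode e) x v))"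

definition search_sound :: "(nat \<Rightarrow> nat) \<Rightarrow> nat \<Rightarrow> nat \<Rightarrow> nat \<Rightarrow> bool" where
  "search_sound a oc r n \<longleftrightarrow> (\<forall>l f i x K.
     run a oc n (call l f (cpair i x) (push (fr_mu l f i x) K)) = ret r 0 \<longrightarrow>
     (\<exists>v. reaches a oc (call l f (cpair i x) (push (fr_mu l f i x) K)) (ret v K) \<and> i \<le> v \<and>
        eval (level_oracle a oc l) (decode f) (cpair v x) 0 \<and>
        (\<forall>j. i \<le> j \<and> j < v \<longrightarrow> (\<exists>w. w \<noteq> 0 \<and> eval (level_oracle a oc l) (decode f) (cpair j x) w))))"

lemma call_sound_returns:
  assumes "call_sound a oc r n" "run a oc n (call l e x (push fr K)) = ret r 0"
  obtains v k where "eval (level_oracle a oc l) (decode e) x v"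
    "reaches a oc (call l e x (push fr K)) (ret v (push fr K))"
    "k < n" "run a oc k (step a oc (ret v (push fr K))) = ret r 0"
proof -
  obtain v where v: "reaches a oc (call l e x (push fr K)) (ret v (push fr K))"
    "eval (level_oracle a oc l) (decode e) x v"
    using assms unfolding call_sound_def by blast
  then obtain m where "run a oc m (call l e x (push fr K)) = ret v (push fr K)"
    unfolding reaches_def by blast
  from run_split[OF assms(2) this ret_push_neq_ret_0] obtain k where
    "n = m + Suc k" "run a oc k (step a oc (ret v (push fr K))) = ret r 0" .
  with v show ?thesis by (intro that) auto
qed

lemma call_sound_basic:
  assumes IH: "\<And>k. k < n \<Longrightarrow> call_sound a oc r k"
    and halts: "run a oc n (call l e x K) = ret r 0" and "e < 6"
  shows "\<exists>v. reaches a oc (call l e x K) (ret v K) \<and> eval (level_oracle a oc l) (decode e) x v"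
proof -
  consider "e = 0" | "e = 1" | "e = 2" | "e = 3" | "e = 4" | "e = 5" "l = 0" | "e = 5" "l \<noteq> 0"
    using \<open>e < 6\<close> by linarith
  then show ?thesis
  proof cases
    case 6
    then show ?thesis by (intro exI[of _ "a x"]) (simp add: reaches_step level_oracle_def)
  next
    case 7
    obtain k where "k < n" "run a oc k (call 0 oc x K) = ret r 0"
      using run_call_first_step[OF halts] 7 by auto
    with IH obtain v where v: "reaches a oc (call 0 oc x K) (ret v K)"
      "eval (level_oracle a oc 0) (decode oc) x v"
      unfolding call_sound_def by blast
    have "reaches a oc (call l e x K) (ret v K)"
      using 7 reaches_trans[OF reaches_step v(1)] by simp
    moreover have "eval (level_oracle a oc l) (decode e) x v"
      using 7 v(2) by (simp add: level_oracle_def Phi_eq_Some_iff)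
    ultimately show ?thesis by blast
  qed (auto intro: reaches_step simp: cfst_def csnd_def)
qed

lemma call_sound_Pair:
  assumes IH: "\<And>k. k < n \<Longrightarrow> call_sound a oc r k"
    and halts: "run a oc n (call l e x K) = ret r 0" and e: "6 \<le> e" "(e - 6) mod 4 = 0"
  shows "\<exists>v. reaches a oc (call l e x K) (ret v K) \<and> eval (level_oracle a oc l) (decode e) x v"
proof -
  define m where "m = (e - 6) div 4"
  let ?K1 = "push (fr_pair1 l (csnd m) x) K"
  have step1: "step a oc (call l e x K) = call l (cfst m) x ?K1"
    using e by (simp add: m_def step_call_compound)
  obtain n1 where n1: "n1 < n" "run a oc n1 (call l (cfst m) x ?K1) = ret r 0"
    using run_call_first_step[OF halts] step1 by metis
  obtain v1 k1 where v1: "eval (level_oracle a oc l) (decode (cfst m)) x v1"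
    "reaches a oc (call l (cfst m) x ?K1) (ret v1 ?K1)"
    and k1: "k1 < n1" "run a oc k1 (step a oc (ret v1 ?K1)) = ret r 0"
    by (rule call_sound_returns[OF IH[OF n1(1)] n1(2)])
  have "run a oc k1 (call l (csnd m) x (push (fr_pair2 v1) K)) = ret r 0"
    using k1(2) by simp
  then obtain v2 k2 where v2: "eval (level_oracle a oc l) (decode (csnd m)) x v2"
    "reaches a oc (call l (csnd m) x (push (fr_pair2 v1) K)) (ret v2 (push (fr_pair2 v1) K))"
    by (rule call_sound_returns[OF IH[OF less_trans[OF k1(1) n1(1)]]])
  have "reaches a oc (call l e x K) (call l (cfst m) x ?K1)" using step1 by (rule reaches_step)
  also note v1(2)
  also have "reaches a oc (ret v1 ?K1) (call l (csnd m) x (push (fr_pair2 v1) K))"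
    by (simp add: reaches_step)
  also note v2(2)
  also have "reaches a oc (ret v2 (push (fr_pair2 v1) K)) (ret (cpair v1 v2) K)"
    by (simp add: reaches_step)
  finally show ?thesis
    using e v1(1) v2(1) by (auto simp: decode_compound m_def Let_def)
qed

lemma call_sound_Comp:
  assumes IH: "\<And>k. k < n \<Longrightarrow> call_sound a oc r k"
    and halts: "run a oc n (call l e x K) = ret r 0" and e: "6 \<le> e" "(e - 6) mod 4 = 1"
  shows "\<exists>v. reaches a oc (call l e x K) (ret v K) \<and> eval (level_oracle a oc l) (decode e) x v"
proof -
  define m where "m = (e - 6) div 4"
  let ?K1 = "push (fr_comp l (cfst m)) K"
  have step1: "step a oc (call l e x K) = call l (csnd m) x ?K1"
    using e by (simp add: m_def step_call_compound)
  obtain n1 where n1: "n1 < n" "run a oc n1 (call l (csnd m) x ?K1) = ret r 0"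
    using run_call_first_step[OF halts] step1 by metis
  obtain y k1 where y: "eval (level_oracle a oc l) (decode (csnd m)) x y"
    "reaches a oc (call l (csnd m) x ?K1) (ret y ?K1)"
    and k1: "k1 < n1" "run a oc k1 (step a oc (ret y ?K1)) = ret r 0"
    by (rule call_sound_returns[OF IH[OF n1(1)] n1(2)])
  from k1 n1 have "k1 < n" "run a oc k1 (call l (cfst m) y K) = ret r 0" by simp_all
  with IH obtain v where v: "reaches a oc (call l (cfst m) y K) (ret v K)"
    "eval (level_oracle a oc l) (decode (cfst m)) y v"
    unfolding call_sound_def by blast
  have "reaches a oc (call l e x K) (call l (csnd m) x ?K1)" using step1 by (rule reaches_step)
  also note y(2)
  also have "reaches a oc (ret y ?K1) (call l (cfst m) y K)" by (simp add: reaches_step)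
  also note v(1)
  finally show ?thesis
    using e y(1) v(2) by (auto simp: decode_compound m_def Let_def)
qed

lemma call_sound_Rec:
  assumes IH: "\<And>k. k < n \<Longrightarrow> call_sound a oc r k"
    and halts: "run a oc n (call l e x K) = ret r 0" and e: "6 \<le> e" "(e - 6) mod 4 = 2"
  shows "\<exists>v. reaches a oc (call l e x K) (ret v K) \<and> eval (level_oracle a oc l) (decode e) x v"
proof -
  define m where "m = (e - 6) div 4"
  have dec: "decode e = Rec (decode (cfst m)) (decode (csnd m))"
    using e by (simp add: decode_compound m_def Let_def)
  obtain j y where x: "x = cpair j y" by (metis cpair_cfst_csnd)
  show ?thesis
  proof (cases j)
    case 0
    have step1: "step a oc (call l e x K) = call l (cfst m) y K"
      using e x 0 by (simp add: m_def step_call_compound)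
    obtain n1 where "n1 < n" "run a oc n1 (call l (cfst m) y K) = ret r 0"
      using run_call_first_step[OF halts] step1 by metis
    with IH obtain v where "reaches a oc (call l (cfst m) y K) (ret v K)"
      "eval (level_oracle a oc l) (decode (cfst m)) y v"
      unfolding call_sound_def by blast
    with step1 show ?thesis
      using x 0 dec by (auto intro: reaches_trans[OF reaches_step])
  next
    case (Suc i)
    let ?K1 = "push (fr_rec l (csnd m) i y) K"
    have step1: "step a oc (call l e x K) = call l e (cpair i y) ?K1"
      using e x Suc by (simp add: m_def step_call_compound)
    obtain n1 where n1: "n1 < n" "run a oc n1 (call l e (cpair i y) ?K1) = ret r 0"
      using run_call_first_step[OF halts] step1 by metis
    obtain w k1 where w: "eval (level_oracle a oc l) (decode e) (cpair i y) w"
      "reaches a oc (call l e (cpair i y) ?K1) (ret w ?K1)"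
      and k1: "k1 < n1" "run a oc k1 (step a oc (ret w ?K1)) = ret r 0"
      by (rule call_sound_returns[OF IH[OF n1(1)] n1(2)])
    from k1 n1 have "k1 < n" "run a oc k1 (call l (csnd m) (cpair i (cpair w y)) K) = ret r 0"
      by simp_all
    with IH obtain v where v: "reaches a oc (call l (csnd m) (cpair i (cpair w y)) K) (ret v K)"
      "eval (level_oracle a oc l) (decode (csnd m)) (cpair i (cpair w y)) v"
      unfolding call_sound_def by blast
    have "reaches a oc (call l e x K) (call l e (cpair i y) ?K1)" using step1 by (rule reaches_step)
    also note w(2)
    also have "reaches a oc (ret w ?K1) (call l (csnd m) (cpair i (cpair w y)) K)"
      by (simp add: reaches_step)
    also note v(1)
    finally show ?thesis
      using x Suc dec w(1) v(2) by auto
  qed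
qed

lemma call_sound_Mu:
  assumes IH: "\<And>k. k < n \<Longrightarrow> search_sound a oc r k"
    and halts: "run a oc n (call l e x K) = ret r 0" and e: "6 \<le> e" "(e - 6) mod 4 = 3"
  shows "\<exists>v. reaches a oc (call l e x K) (ret v K) \<and> eval (level_oracle a oc l) (decode e) x v"
proof -
  define m where "m = (e - 6) div 4"
  let ?s = "call l m (cpair 0 x) (push (fr_mu l m 0 x) K)"
  have step1: "step a oc (call l e x K) = ?s"
    using e by (simp add: m_def step_call_compound)
  obtain n1 where "n1 < n" "run a oc n1 ?s = ret r 0"
    using run_call_first_step[OF halts] step1 by metis
  with IH obtain v where v: "reaches a oc ?s (ret v K)"
    "eval (level_oracle a oc l) (decode m) (cpair v x) 0"
    "\<forall>j<v. \<exists>w. w \<noteq> 0 \<and> eval (level_oracle a oc l) (decode m) (cpair j x) w"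
    unfolding search_sound_def by fastforce
  then show ?thesis
    using e step1 by (auto simp: decode_compound m_def Let_def eval_Mu intro: reaches_trans[OF reaches_step])
qed

lemma call_sound_step:
  assumes "\<And>k. k < n \<Longrightarrow> call_sound a oc r k" "\<And>k. k < n \<Longrightarrow> search_sound a oc r k"
  shows "call_sound a oc r n"
  unfolding call_sound_def
proof (intro allI impI)
  fix l e x K
  assume halts: "run a oc n (call l e x K) = ret r 0"
  have "(e - 6) mod 4 < 4" by simp
  then consider "e < 6" | "6 \<le> e" "(e - 6) mod 4 = 0" | "6 \<le> e" "(e - 6) mod 4 = 1"
    | "6 \<le> e" "(e - 6) mod 4 = 2" | "6 \<le> e" "(e - 6) mod 4 = 3"
    by linarith
  then show "\<exists>v. reaches a oc (call l e x K) (ret v K) \<and> eval (level_oracle a oc l) (decode e) x v"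
  proof cases
    case 1
    from call_sound_basic[OF assms(1) halts 1] show ?thesis .
  next
    case 2
    from call_sound_Pair[OF assms(1) halts 2] show ?thesis .
  next
    case 3
    from call_sound_Comp[OF assms(1) halts 3] show ?thesis .
  next
    case 4
    from call_sound_Rec[OF assms(1) halts 4] show ?thesis .
  next
    case 5
    from call_sound_Mu[OF assms(2) halts 5] show ?thesis .
  qed
qed

lemma search_sound_step:
  assumes IH: "\<And>k. k < n \<Longrightarrow> search_sound a oc r k" and call: "call_sound a oc r n"
  shows "search_sound a oc r n"
  unfolding search_sound_def
proof (intro allI impI)
  fix l f i x K
  let ?\<alpha> = "level_oracle a oc l" and ?K = "push (fr_mu l f i x) K"
  assume halts: "run a oc n (call l f (cpair i x) ?K) = ret r 0"
  then obtain v1 k where v1: "eval ?\<alpha> (decode f) (cpair i x) v1"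
    "reaches a oc (call l f (cpair i x) ?K) (ret v1 ?K)"
    and k: "k < n" "run a oc k (step a oc (ret v1 ?K)) = ret r 0"
    by (elim call_sound_returns[OF call])
  show "\<exists>v. reaches a oc (call l f (cpair i x) ?K) (ret v K) \<and> i \<le> v \<and>
      eval ?\<alpha> (decode f) (cpair v x) 0 \<and>
      (\<forall>j. i \<le> j \<and> j < v \<longrightarrow> (\<exists>w. w \<noteq> 0 \<and> eval ?\<alpha> (decode f) (cpair j x) w))"
  proof (cases "v1 = 0")
    case True
    have "reaches a oc (ret v1 ?K) (ret i K)"
      using True by (simp add: reaches_step)
    with v1(2) have "reaches a oc (call l f (cpair i x) ?K) (ret i K)"
      by (rule reaches_trans)
    with v1(1) True show ?thesis by auto
  next
    case False
    let ?K' = "push (fr_mu l f (Suc i) x) K"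
    from k False have "run a oc k (call l f (cpair (Suc i) x) ?K') = ret r 0" by simp
    with IH[OF k(1)] obtain v where v: "reaches a oc (call l f (cpair (Suc i) x) ?K') (ret v K)"
      "Suc i \<le> v" "eval ?\<alpha> (decode f) (cpair v x) 0"
      "\<forall>j. Suc i \<le> j \<and> j < v \<longrightarrow> (\<exists>w. w \<noteq> 0 \<and> eval ?\<alpha> (decode f) (cpair j x) w)"
      unfolding search_sound_def by blast
    note v1(2)
    also have "reaches a oc (ret v1 ?K) (call l f (cpair (Suc i) x) ?K')"
      using False by (simp add: reaches_step)
    also note v(1)
    finally have "reaches a oc (call l f (cpair i x) ?K) (ret v K)" .
    moreover have "\<exists>w. w \<noteq> 0 \<and> eval ?\<alpha> (decode f) (cpair j x) w" if "i \<le> j" "j < v" for j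
      using v1(1) False v(4) that by (cases "j = i") auto
    ultimately show ?thesis using v(2,3) by auto
  qed
qed

lemma machine_sound: "call_sound a oc r n \<and> search_sound a oc r n"
proof (induction n rule: less_induct)
  case (less n)
  then have "call_sound a oc r n" by (blast intro: call_sound_step)
  with less show ?case by (blast intro: search_sound_step)
qed

theorem run_halts_iff_eval:
  "(\<exists>n. run a oc n (call l e x 0) = ret v 0) \<longleftrightarrow> eval (level_oracle a oc l) (decode e) x v"
proof
  assume "\<exists>n. run a oc n (call l e x 0) = ret v 0"
  then obtain n where n: "run a oc n (call l e x 0) = ret v 0" ..
  with machine_sound[of a oc v n] obtain v' where
    "reaches a oc (call l e x 0) (ret v' 0)" "eval (level_oracle a oc l) (decode e) x v'"
    unfolding call_sound_def by blast
  moreover from n have "reaches a oc (call l e x 0) (ret v 0)"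
    unfolding reaches_def by blast
  ultimately show "eval (level_oracle a oc l) (decode e) x v"
    using reaches_ret_0_unique by metis
next
  assume "eval (level_oracle a oc l) (decode e) x v"
  from eval_level_oracle_imp_reaches[OF this, of 0] show "\<exists>n. run a oc n (call l e x 0) = ret v 0"
    unfolding reaches_def .
qed

section \<open>A universal functional\<close>

lemma computable_step_ans:
  assumes "computable A" "computable Oc" "computable S"
  shows "computable (\<lambda>a x. step_ans (A a x) (Oc a x) (S a x))"
  unfolding step_ans_def Let_def machine_defs
  by (intro computable_intros assms zero_less_numeral)+

lemma computable_run:
  assumes "computable Ans" "computable P" "computable Oc" "computable N" "computable S"
  shows "computable (\<lambda>a x. run (\<lambda>q. Ans a (cpair (P a x) q)) (Oc a x) (N a x) (S a x))"
proof -
  \<comment> \<open>the parameter \<open>P\<close> and the index \<open>oc\<close> travel along in the argument \<open>y\<close> of \<open>prim_rec\<close>\<close>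
  define G where "G A z = step_ans (A (cpair (cfst (cfst (csnd (csnd z)))) (query (cfst (csnd z)))))
    (csnd (cfst (csnd (csnd z)))) (cfst (csnd z))" for A z
  have "prim_rec csnd (G A) n (cpair (cpair p oc) s) = run (\<lambda>q. A (cpair p q)) oc n s" for A p oc n s
    by (induction n) (simp_all add: G_def run_Suc_outer step_def)
  moreover have "computable (\<lambda>a x. prim_rec csnd (G (Ans a)) (N a x) (cpair (cpair (P a x) (Oc a x)) (S a x)))"
    unfolding G_def
    by (rule computable_prim_rec[where F = "\<lambda>a. csnd"])
      (intro computable_step_ans computable_intros assms computable_comp[OF assms(1)] | simp only: query_def)+
  ultimately show ?thesis by simp
qed

lemma computable_run_oracle:
  assumes "computable Oc" "computable N" "computable S"
  shows "computable (\<lambda>a x. run a (Oc a x) (N a x) (S a x))"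
  using computable_run[OF computable_oracle[OF computable_csnd[OF computable_id]] computable_const assms]
  by simp

definition halted :: "nat \<Rightarrow> bool" where
  "halted s \<longleftrightarrow> cfst (cfst s) = 1 \<and> csnd s = 0"

lemma halted_iff: "halted s \<longleftrightarrow> s = ret (csnd (cfst s)) 0"
  unfolding halted_def ret_def by (metis cfst_cpair csnd_cpair cpair_cfst_csnd)

lemma pcomputable_universal:
  "pcomputable (\<lambda>a z. Phi (level_oracle a (cfst z) l) (cfst (csnd z)) (csnd (csnd z)))"
proof -
  define init where "init z = call l (cfst (csnd z)) (csnd (csnd z)) 0" for z
  define h where
    "h a w = (if halted (run a (cfst (csnd w)) (cfst w) (init (csnd w))) then 0 else (1::nat))" for a w
  define out where "out a w = csnd (cfst (run a (cfst (csnd w)) (cfst w) (init (csnd w))))" for a w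
  have "computable h" "computable out"
    unfolding h_def out_def init_def halted_def call_def
    by (intro computable_run_oracle computable_intros)+
  then have "pcomputable (\<lambda>a z. map_option (\<lambda>n. out a (cpair n z))
      (if \<exists>n. h a (cpair n z) = 0 then Some (LEAST n. h a (cpair n z) = 0) else None))"
    by (intro pcomputable_map pcomputable_Least)
  moreover have "map_option (\<lambda>n. out a (cpair n z))
      (if \<exists>n. h a (cpair n z) = 0 then Some (LEAST n. h a (cpair n z) = 0) else None) =
      Phi (level_oracle a (cfst z) l) (cfst (csnd z)) (csnd (csnd z))" for a z
  proof (cases "\<exists>n. h a (cpair n z) = 0")
    case True
    define n where "n = (LEAST n. h a (cpair n z) = 0)"
    have "h a (cpair n z) = 0" using LeastI_ex[OF True] by (simp add: n_def)
    then have "run a (cfst z) n (init z) = ret (out a (cpair n z)) 0"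
      unfolding h_def out_def by (simp add: halted_iff split: if_splits)
    then have "eval (level_oracle a (cfst z) l) (decode (cfst (csnd z))) (csnd (csnd z)) (out a (cpair n z))"
      using run_halts_iff_eval unfolding init_def by blast
    then have "Phi (level_oracle a (cfst z) l) (cfst (csnd z)) (csnd (csnd z)) = Some (out a (cpair n z))"
      by (simp add: Phi_eq_Some_iff)
    with True show ?thesis by (simp add: n_def)
  next
    case False
    have "\<not> eval (level_oracle a (cfst z) l) (decode (cfst (csnd z))) (csnd (csnd z)) v" for v
    proof
      assume "eval (level_oracle a (cfst z) l) (decode (cfst (csnd z))) (csnd (csnd z)) v"
      then obtain n where "run a (cfst z) n (init z) = ret v 0"
        using run_halts_iff_eval unfolding init_def by blast
      then have "h a (cpair n z) = 0" unfolding h_def halted_def by (simp add: ret_def)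
      with False show False by blast
    qed
    then have "Phi (level_oracle a (cfst z) l) (cfst (csnd z)) (csnd (csnd z)) = None"
      by (simp add: Phi_eq_None_iff)
    with False show ?thesis by simp
  qed
  ultimately show ?thesis by simp
qed

lemma pcomputable_Phi_universal: "pcomputable (\<lambda>a z. Phi (oracle_of a) (cfst z) (csnd z))"
proof -
  have "pcomputable (\<lambda>a z. Phi (level_oracle a (cfst (cpair 0 z)) 0)
      (cfst (csnd (cpair 0 z))) (csnd (csnd (cpair 0 z))))"
    by (rule pcomputable_comp[OF pcomputable_universal]) (intro computable_intros)
  then show ?thesis by (simp add: level_oracle_def)
qed

lemma pcomputable_Phi_Phi_universal:
  "pcomputable (\<lambda>a z. Phi (Phi (oracle_of a) (cfst z)) (cfst (csnd z)) (csnd (csnd z)))"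
  using pcomputable_universal[of 1] by (simp add: level_oracle_def)

lemma run_agree:
  assumes "\<forall>k<N. is_query (run A oc k s) \<longrightarrow> A (query (run A oc k s)) = B (query (run A oc k s))"
  shows "run A oc N s = run B oc N s"
  using assms
proof (induction N)
  case (Suc N)
  then have IH: "run A oc N s = run B oc N s" by auto
  show ?case
  proof (cases "is_query (run A oc N s)")
    case True
    with Suc.prems have "A (query (run A oc N s)) = B (query (run A oc N s))" by auto
    with IH show ?thesis by (simp add: run_Suc_outer step_def)
  next
    case False
    with IH show ?thesis
      by (simp add: run_Suc_outer step_def step_ans_no_query[of _ "A (query _)" _ "B (query _)"])
  qed
qed simp

lemma halted_run_mono:
  assumes "halted (run A oc n s)" "n \<le> m"
  shows "halted (run A oc m s)"
proof -
  have "run A oc m s = run A oc (m - n) (run A oc n s)"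
    using assms(2) run_add[of A oc n "m - n" s] by simp
  also have "\<dots> = run A oc n s"
    using assms(1) halted_iff run_ret_0 by metis
  finally show ?thesis using assms(1) by simp
qed

lemma Phi_halts_iff_halted_run:
  "Phi (oracle_of A) e x \<noteq> None \<longleftrightarrow> (\<exists>n. halted (run A oc n (call 0 e x 0)))"
proof
  assume "Phi (oracle_of A) e x \<noteq> None"
  then obtain v where "eval (level_oracle A oc 0) (decode e) x v"
    by (auto simp: Phi_eq_None_iff level_oracle_def)
  then obtain n where "run A oc n (call 0 e x 0) = ret v 0"
    using run_halts_iff_eval by blast
  then show "\<exists>n. halted (run A oc n (call 0 e x 0))"
    by (intro exI[of _ n]) (simp add: halted_def ret_def)
next
  assume "\<exists>n. halted (run A oc n (call 0 e x 0))"
  then obtain n where "run A oc n (call 0 e x 0) = ret (csnd (cfst (run A oc n (call 0 e x 0)))) 0"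
    using halted_iff by blast
  then have "eval (level_oracle A oc 0) (decode e) x (csnd (cfst (run A oc n (call 0 e x 0))))"
    using run_halts_iff_eval by blast
  then show "Phi (oracle_of A) e x \<noteq> None"
    by (auto simp: Phi_eq_None_iff level_oracle_def)
qed

section \<open>Approximating the double jump\<close>

definition jump_of :: "(nat \<Rightarrow> nat) \<Rightarrow> nat set" where
  "jump_of A = {i. Phi (oracle_of A) i i \<noteq> None}"

lemma jump_of_chr: "jump_of (chr X) = jump X"
  unfolding jump_of_def jump_def by (simp add: chi_chr)

definition jump_stage :: "(nat \<Rightarrow> nat) \<Rightarrow> nat \<Rightarrow> nat \<Rightarrow> nat" where
  "jump_stage A s i = (if halted (run A 0 s (call 0 i i 0)) then 1 else 0)"

lemma jump_stage_eventually: "\<exists>s0. \<forall>s\<ge>s0. jump_stage A s i = chr (jump_of A) i"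
proof (cases "i \<in> jump_of A")
  case True
  then obtain s0 where "halted (run A 0 s0 (call 0 i i 0))"
    using Phi_halts_iff_halted_run[of A i i 0] unfolding jump_of_def by blast
  then have "\<forall>s\<ge>s0. jump_stage A s i = 1"
    unfolding jump_stage_def using halted_run_mono by auto
  with True show ?thesis by (auto simp: chr_def)
next
  case False
  then have "jump_stage A s i = 0" for s
    using Phi_halts_iff_halted_run[of A i i 0] unfolding jump_of_def jump_stage_def by auto
  with False show ?thesis by (auto simp: chr_def)
qed

lemma run_jump_stage_eventually:
  "\<exists>s0. \<forall>s\<ge>s0. run (jump_stage A s) 0 N S = run (chr (jump_of A)) 0 N S"
proof -
  have finite_set: "finite Q \<Longrightarrow> \<exists>s0. \<forall>s\<ge>s0. \<forall>q\<in>Q. jump_stage A s q = chr (jump_of A) q" for Q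
  proof (induction Q rule: finite_induct)
    case (insert q Q)
    then obtain s1 where "\<forall>s\<ge>s1. \<forall>q\<in>Q. jump_stage A s q = chr (jump_of A) q" by blast
    moreover obtain s2 where "\<forall>s\<ge>s2. jump_stage A s q = chr (jump_of A) q"
      using jump_stage_eventually by blast
    ultimately show ?case by (intro exI[of _ "max s1 s2"]) auto
  qed simp
  \<comment> \<open>only the finitely many queries of the first \<open>N\<close> steps matter\<close>
  let ?Q = "(\<lambda>k. query (run (chr (jump_of A)) 0 k S)) ` {..<N}"
  obtain s0 where s0: "\<forall>s\<ge>s0. \<forall>q\<in>?Q. jump_stage A s q = chr (jump_of A) q"
    using finite_set[of ?Q] by blast
  have "run (chr (jump_of A)) 0 N S = run (jump_stage A s) 0 N S" if "s \<ge> s0" for s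
    by (rule run_agree) (use s0 that in auto)
  then show ?thesis by metis
qed

definition halts_at_stage :: "(nat \<Rightarrow> nat) \<Rightarrow> nat \<Rightarrow> nat \<Rightarrow> nat \<Rightarrow> bool" where
  "halts_at_stage A e N s \<longleftrightarrow> halted (run (jump_stage A s) 0 N (call 0 e e 0))"

lemma mem_jump_of_jump_of_iff:
  "e \<in> jump_of (chr (jump_of A)) \<longleftrightarrow> (\<exists>N s0. \<forall>s\<ge>s0. halts_at_stage A e N s)"
proof
  assume "e \<in> jump_of (chr (jump_of A))"
  then obtain N where N: "halted (run (chr (jump_of A)) 0 N (call 0 e e 0))"
    using Phi_halts_iff_halted_run unfolding jump_of_def by blast
  obtain s0 where "\<forall>s\<ge>s0. run (jump_stage A s) 0 N (call 0 e e 0) = run (chr (jump_of A)) 0 N (call 0 e e 0)"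
    using run_jump_stage_eventually by blast
  with N show "\<exists>N s0. \<forall>s\<ge>s0. halts_at_stage A e N s"
    unfolding halts_at_stage_def by (intro exI[of _ N] exI[of _ s0]) auto
next
  assume "\<exists>N s0. \<forall>s\<ge>s0. halts_at_stage A e N s"
  then obtain N s0 where H: "\<forall>s\<ge>s0. halts_at_stage A e N s" by blast
  obtain s1 where s1: "\<forall>s\<ge>s1. run (jump_stage A s) 0 N (call 0 e e 0) = run (chr (jump_of A)) 0 N (call 0 e e 0)"
    using run_jump_stage_eventually by blast
  have "halted (run (chr (jump_of A)) 0 N (call 0 e e 0))"
    using H[rule_format, of "max s0 s1"] s1[rule_format, of "max s0 s1"]
    by (simp add: halts_at_stage_def)
  then show "e \<in> jump_of (chr (jump_of A))"
    using Phi_halts_iff_halted_run unfolding jump_of_def by blast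
qed

definition const_fn :: "nat \<Rightarrow> pfun" where "const_fn n = (\<lambda>x. Some n)"

definition theta :: "(nat \<Rightarrow> nat) \<Rightarrow> nat \<Rightarrow> pfun" where
  "theta A e z = (if \<exists>s. \<not> halts_at_stage A e (cfst z) (csnd z + s) then Some 0 else None)"

lemma theta_eq_const_0_iff: "theta A e = const_fn 0 \<longleftrightarrow> e \<notin> jump_of (chr (jump_of A))"
proof -
  have "theta A e = const_fn 0 \<longleftrightarrow> (\<forall>z. \<exists>s. \<not> halts_at_stage A e (cfst z) (csnd z + s))"
    unfolding theta_def const_fn_def by (auto simp: fun_eq_iff split: if_splits)
  also have "\<dots> \<longleftrightarrow> (\<forall>N s0. \<exists>s. \<not> halts_at_stage A e N (s0 + s))"
    by (metis cfst_cpair csnd_cpair)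
  also have "\<dots> \<longleftrightarrow> \<not> (\<exists>N s0. \<forall>s\<ge>s0. halts_at_stage A e N s)"
    by (metis le_add1 le_add_diff_inverse)
  also have "\<dots> \<longleftrightarrow> e \<notin> jump_of (chr (jump_of A))"
    using mem_jump_of_jump_of_iff by blast
  finally show ?thesis .
qed

definition oracle_slice :: "nat \<Rightarrow> nat \<Rightarrow> (nat \<Rightarrow> nat) \<Rightarrow> nat \<Rightarrow> nat" where
  "oracle_slice m c a k = a (m * k + c)"

lemma computable_run_slice:
  assumes "computable Oc" "computable N" "computable S"
  shows "computable (\<lambda>a x. run (oracle_slice m c a) (Oc a x) (N a x) (S a x))"
proof -
  have "computable (\<lambda>a x. run (\<lambda>q. (\<lambda>a w. a (m * csnd w + c)) a (cpair 0 q)) (Oc a x) (N a x) (S a x))"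
    by (rule computable_run) (intro computable_intros assms)+
  moreover have "(\<lambda>q. (\<lambda>a w. a (m * csnd w + c)) a (cpair 0 q)) = oracle_slice m c a" for a
    by (simp add: fun_eq_iff oracle_slice_def)
  ultimately show ?thesis by simp
qed

lemma computable_jump_stage:
  assumes "computable S" "computable I"
  shows "computable (\<lambda>a x. jump_stage (oracle_slice m c a) (S a x) (I a x))"
  unfolding jump_stage_def halted_def call_def
  by (intro computable_run_slice computable_intros assms)+

lemma computable_pred_halts_at_stage:
  assumes "computable E" "computable N" "computable S"
  shows "computable_pred (\<lambda>a x. halts_at_stage (oracle_slice m c a) (E a x) (N a x) (S a x))"
proof -
  have "computable (\<lambda>a x. run (\<lambda>q. (\<lambda>a w. jump_stage (oracle_slice m c a) (cfst w) (csnd w)) a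
      (cpair (S a x) q)) 0 (N a x) (call 0 (E a x) (E a x) 0))"
    by (rule computable_run) (intro computable_jump_stage computable_intros assms | simp only: call_def)+
  then have "computable (\<lambda>a x. run (jump_stage (oracle_slice m c a) (S a x)) 0 (N a x) (call 0 (E a x) (E a x) 0))"
    by simp
  then show ?thesis
    unfolding halts_at_stage_def halted_def
    by (intro computable_intros computable_cfst computable_csnd | assumption)+
qed

lemma pcomputable_theta:
  assumes "computable E" "computable Z"
  shows "pcomputable (\<lambda>a x. theta (oracle_slice m c a) (E a x) (Z a x))"
proof -
  define h where "h a w = (if halts_at_stage (oracle_slice m c a) (E a (csnd w)) (cfst (Z a (csnd w)))
    (csnd (Z a (csnd w)) + cfst w) then 1 else (0::nat))" for a w
  have "computable h"
    unfolding h_def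
    by (intro computable_if computable_pred_halts_at_stage computable_intros
        computable_comp[OF assms(1)] computable_comp[OF assms(2)])+
  then have "pcomputable (\<lambda>a x. map_option (\<lambda>v. (\<lambda>a x. 0) a (cpair v x))
      (if \<exists>n. h a (cpair n x) = 0 then Some (LEAST n. h a (cpair n x) = 0) else None))"
    by (intro pcomputable_map pcomputable_Least computable_intros)
  moreover have "map_option (\<lambda>v. (\<lambda>a x. 0) a (cpair v x))
      (if \<exists>n. h a (cpair n x) = 0 then Some (LEAST n. h a (cpair n x) = 0) else None) =
      theta (oracle_slice m c a) (E a x) (Z a x)" for a x
    unfolding theta_def h_def by auto
  ultimately show ?thesis by simp
qed

section \<open>Embeddings of \<open>B\<^sup>X\<close> into \<open>K\<^sub>1\<^sup>Y\<close> compute \<open>X''\<close>\<close>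

lemma pcomputable_in_B_carrier:
  assumes "pcomputable g"
  shows "(\<lambda>x. g (chr X) x) \<in> B_carrier X"
proof -
  have "(\<lambda>x. g (chr X) x) = Phi (chi X) (index_of g)"
    by (simp add: fun_eq_iff chi_chr Phi_index_of[OF assms])
  then show ?thesis unfolding B_carrier_def computable_in_def by blast
qed

lemma const_fn_in_B_carrier: "const_fn n \<in> B_carrier X"
  using pcomputable_in_B_carrier[OF pcomputable_Some[OF computable_const[of n]]]
  by (simp add: const_fn_def)

lemma Phi_in_B_carrier: "Phi (chi X) e \<in> B_carrier X"
  unfolding B_carrier_def computable_in_def by blast

lemma join_Some: "join (\<lambda>x. Some (f x)) (\<lambda>x. Some (g x)) =
    (\<lambda>k. Some (if even k then f (k div 2) else g (k div 2)))"
  by (simp add: fun_eq_iff join_def)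

lemma B_app_succ: "\<exists>s \<in> B_carrier X. \<forall>n. B_app s (const_fn n) = Some (const_fn (Suc n))"
proof -
  define e where "e = index_of (\<lambda>a k. Some (Suc (a 1)))"
  have e: "Phi (oracle_of a) e k = Some (Suc (a 1))" for a k
    unfolding e_def by (rule Phi_index_of) (intro pcomputable_Some computable_intros)
  have "B_app (const_fn e) (const_fn n) = Some (const_fn (Suc n))" for n
    using join_Some[of "\<lambda>x. e" "\<lambda>x. n"] by (simp add: B_app_def const_fn_def e)
  with const_fn_in_B_carrier show ?thesis by blast
qed

lemma theta_in_B_carrier: "theta (chr X) e \<in> B_carrier X"
proof -
  have "pcomputable (\<lambda>a w. theta (oracle_slice 1 0 a) (cfst w) (csnd w))"
    by (intro pcomputable_theta computable_intros)
  moreover have "oracle_slice 1 0 a = a" for a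
    by (simp add: fun_eq_iff oracle_slice_def)
  ultimately have "(\<lambda>x. theta (chr X) (cfst x) (csnd x)) \<in> B_carrier X"
    using pcomputable_in_B_carrier[of "\<lambda>a w. theta (oracle_slice 1 0 a) (cfst w) (csnd w)" X] by simp
  then obtain i where i: "(\<lambda>x. theta (chr X) (cfst x) (csnd x)) = Phi (chi X) i"
    unfolding B_carrier_def computable_in_def by blast
  have "theta (chr X) e x = Phi (chi X) i (cpair e x)" for x
    using fun_cong[OF i, of "cpair e x"] by simp
  then have "theta (chr X) e = Phi (chi X) (smn i e)"
    by (simp add: fun_eq_iff Phi_smn)
  then show ?thesis by (simp add: Phi_in_B_carrier)
qed

text \<open>The oracle of \<open>u \<cdot> const_fn e\<close> is the join of \<open>u\<close> and \<open>const_fn e\<close>: it has \<open>e\<close> at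
  position \<open>1\<close> and \<open>chr X\<close> on the positions \<open>2 k + 2\<close>.\<close>

lemma B_app_theta: "\<exists>u \<in> B_carrier X. \<forall>e. B_app u (const_fn e) = Some (theta (chr X) e)"
proof -
  define i where "i = index_of (\<lambda>b. theta (oracle_slice 2 2 b) (b 1))"
  have i: "Phi (oracle_of b) i z = theta (oracle_slice 2 2 b) (b 1) z" for b z
    unfolding i_def by (rule Phi_index_of) (intro pcomputable_theta computable_intros)
  define u :: pfun where "u = (\<lambda>k. Some (if k = 0 then i else chr X (k - 1)))"
  have "u \<in> B_carrier X"
    using pcomputable_in_B_carrier[OF pcomputable_Some, of "\<lambda>a k. if k = 0 then i else a (k - 1)" X]
    by (simp add: u_def computable_intros)
  moreover have "B_app u (const_fn e) = Some (theta (chr X) e)" for e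
  proof -
    define b where "b k = (if even k then (if k div 2 = 0 then i else chr X (k div 2 - 1)) else e)" for k
    have "join u (const_fn e) = oracle_of b"
      unfolding u_def const_fn_def b_def by (simp add: join_Some)
    moreover have "oracle_slice 2 2 b = chr X" "b 1 = e"
      by (simp_all add: fun_eq_iff oracle_slice_def b_def)
    ultimately show ?thesis by (simp add: B_app_def u_def i)
  qed
  ultimately show ?thesis by blast
qed

lemma eval_iterate:
  assumes "\<And>n. eval \<alpha> (decode e) (g n) (g (Suc n))"
  shows "\<exists>p. \<forall>n. eval \<alpha> p n (g n)"
proof -
  define R where "R = Rec (const_prog (g 0)) (Comp (decode e) (Comp Fst Snd))"
  have "eval \<alpha> R (cpair n 0) (g n)" for n
  proof (induction n)
    case 0
    show ?case unfolding R_def by (subst eval_Rec_0) simp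
  next
    case (Suc n)
    then show ?case unfolding R_def using assms[of n] by auto
  qed
  then have "\<forall>n. eval \<alpha> (Comp R (Pair Ident Zero)) n (g n)" by auto
  then show ?thesis by blast
qed

lemma embedding_imp_jump_jump_le:
  assumes "pca_embedding (B_carrier X) B_app K1_carrier (K1_app Y) f"
  shows "jump (jump X) \<le>\<^sub>T Y"
proof -
  have inj: "inj_on f (B_carrier X)"
    and hom: "\<And>a b c. a \<in> B_carrier X \<Longrightarrow> b \<in> B_carrier X \<Longrightarrow> B_app a b = Some c \<Longrightarrow>
      eval (chi Y) (decode (f a)) (f b) (f c)"
    using assms unfolding pca_embedding_def K1_app_def Phi_eq_Some_iff by blast+
  obtain s where "s \<in> B_carrier X" "\<And>n. B_app s (const_fn n) = Some (const_fn (Suc n))"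
    using B_app_succ by blast
  with hom have "eval (chi Y) (decode (f s)) (f (const_fn n)) (f (const_fn (Suc n)))" for n
    using const_fn_in_B_carrier by blast
  then obtain P where P: "\<And>n. eval (chi Y) P n (f (const_fn n))"
    using eval_iterate[where g = "\<lambda>n. f (const_fn n)" and e = "f s" and \<alpha> = "chi Y"] by blast
  obtain u where "u \<in> B_carrier X" "\<And>e. B_app u (const_fn e) = Some (theta (chr X) e)"
    using B_app_theta by blast
  with hom have theta: "eval (chi Y) (decode (f u)) (f (const_fn e)) (f (theta (chr X) e))" for e
    using const_fn_in_B_carrier by blast
  have decide: "e \<in> jump (jump X) \<longleftrightarrow> f (theta (chr X) e) \<noteq> f (const_fn 0)" for e
    using theta_eq_const_0_iff[of "chr X" e] inj_on_eq_iff[OF inj theta_in_B_carrier const_fn_in_B_carrier]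
    by (simp add: jump_of_chr)
  have "computable (\<lambda>a x. if x = f (const_fn 0) then 0 else 1)"
    by (intro computable_intros)
  then obtain C where C: "\<And>x v. eval (chi Y) C x v \<longleftrightarrow> v = (if x = f (const_fn 0) then 0 else 1)"
    using computable_imp_prog unfolding chi_chr by blast
  have "eval (chi Y) C (f (theta (chr X) e)) (chr (jump (jump X)) e)" for e
    using decide[of e] by (simp add: C chr_def)
  then have "eval (chi Y) (Comp C (Comp (decode (f u)) P)) e (chr (jump (jump X)) e)" for e
    unfolding eval_Comp using P theta by blast
  then have "Phi (chi Y) (encode (Comp C (Comp (decode (f u)) P))) e = Some (chr (jump (jump X)) e)" for e
    by (simp only: Phi_eq_Some_iff decode_encode)
  then have "chi (jump (jump X)) = Phi (chi Y) (encode (Comp C (Comp (decode (f u)) P)))"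
    by (simp add: fun_eq_iff chi_def chr_def)
  then show ?thesis unfolding turing_le_def computable_in_def by blast
qed

section \<open>Deciding equality of \<open>X\<close>-indices in \<open>X''\<close>\<close>

definition halt_index :: "nat \<Rightarrow> nat \<Rightarrow> nat" where
  "halt_index i x = smn (index_of (\<lambda>a w. Phi (oracle_of a) (cfst (cfst w)) (csnd (cfst w)))) (cpair i x)"

lemma halt_index_in_jump_iff: "halt_index i x \<in> jump X \<longleftrightarrow> Phi (chi X) i x \<noteq> None"
proof -
  have "pcomputable (\<lambda>a w. Phi (oracle_of a) (cfst (cfst w)) (csnd (cfst w)))"
    using pcomputable_comp[OF pcomputable_Phi_universal computable_cfst[OF computable_id]] by simp
  then show ?thesis
    unfolding jump_def halt_index_def by (simp add: Phi_smn chi_chr Phi_index_of)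
qed

definition member_index :: "nat \<Rightarrow> nat" where
  "member_index k = smn (index_of (\<lambda>a w. if a (cfst w) = 1 then Some 0 else None)) k"

lemma member_index_in_jump_iff: "member_index k \<in> jump X \<longleftrightarrow> k \<in> X"
proof -
  define h where "h a w = (if a (cfst (csnd w)) = 1 then 0 else (1::nat))" for a :: "nat \<Rightarrow> nat" and w
  have "computable h" unfolding h_def by (intro computable_intros)
  then have "pcomputable (\<lambda>a x. if \<exists>n. h a (cpair n x) = 0 then Some (LEAST n. h a (cpair n x) = 0) else None)"
    by (rule pcomputable_Least)
  moreover have "(if \<exists>n. h a (cpair n x) = 0 then Some (LEAST n. h a (cpair n x) = 0) else None) =
      (if a (cfst x) = 1 then Some 0 else None)" for a x
    unfolding h_def by auto
  ultimately have "pcomputable (\<lambda>a w. if a (cfst w) = 1 then Some 0 else None)" by simp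
  then show ?thesis
    unfolding jump_def member_index_def by (simp add: Phi_smn chi_chr Phi_index_of chr_def)
qed

definition jump_reduction :: nat where
  "jump_reduction = index_of (\<lambda>a k. Some (a (member_index k)))"

lemma Phi_jump_reduction: "Phi (chi (jump X)) jump_reduction = chi X"
proof -
  have "pcomputable (\<lambda>a k. Some (a (member_index k)))"
    unfolding member_index_def by (intro pcomputable_Some computable_intros)
  then show ?thesis
    unfolding jump_reduction_def
    by (simp add: fun_eq_iff chi_chr Phi_index_of chr_def member_index_in_jump_iff)
qed

text \<open>The test below, run with oracle \<open>X'\<close> on \<open>cpair n (cpair (cpair i j) _)\<close>, answers
  whether \<open>\<Phi>\<^sup>X\<^sub>i(n)\<close> and \<open>\<Phi>\<^sup>X\<^sub>j(n)\<close> agree: \<open>X'\<close> tells whether they converge, and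
  only if both do are they computed.\<close>

definition agree_test :: "(nat \<Rightarrow> nat) \<Rightarrow> nat \<Rightarrow> nat option" where
  "agree_test a w = (let n = cfst w; i = cfst (cfst (csnd w)); j = csnd (cfst (csnd w)) in
    if (if a (halt_index i n) = 1 \<and> a (halt_index j n) = 1 then 1 else (0::nat)) = 0
    then Some (if a (halt_index i n) = a (halt_index j n) then 1 else 0)
    else (case Phi (Phi (oracle_of a) jump_reduction) i n of None \<Rightarrow> None
      | Some vi \<Rightarrow> (case Phi (Phi (oracle_of a) jump_reduction) j n of None \<Rightarrow> None
      | Some vj \<Rightarrow> Some (if vi = vj then 1 else 0))))"

lemma pcomputable_agree_test: "pcomputable agree_test"
proof -
  have Phi_Phi: "pcomputable (\<lambda>a w. Phi (Phi (oracle_of a) jump_reduction) (I a w) (N a w))"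
    if "computable I" "computable N" for I N
    using pcomputable_comp[OF pcomputable_Phi_Phi_universal,
        of "\<lambda>a w. cpair jump_reduction (cpair (I a w) (N a w))"] that
    by (simp add: computable_intros)
  have "pcomputable (\<lambda>a w. Phi (Phi (oracle_of a) jump_reduction) (cfst (cfst (csnd w))) (cfst w))"
    "pcomputable (\<lambda>a w. Phi (Phi (oracle_of a) jump_reduction) (csnd (cfst (csnd (csnd w)))) (cfst (csnd w)))"
    "pcomputable (\<lambda>a w. Some (if cfst (csnd w) = cfst w then 1 else 0))"
    by (intro Phi_Phi pcomputable_Some computable_intros)+
  from pcomputable_bind[OF this(1) pcomputable_bind[OF this(2,3)]]
  have "pcomputable (\<lambda>a w. case Phi (Phi (oracle_of a) jump_reduction) (cfst (cfst (csnd w))) (cfst w) of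
      None \<Rightarrow> None
    | Some vi \<Rightarrow> (case Phi (Phi (oracle_of a) jump_reduction) (csnd (cfst (csnd w))) (cfst w) of
        None \<Rightarrow> None
      | Some vj \<Rightarrow> Some (if vi = vj then 1 else 0)))"
    by (simp cong: option.case_cong)
  then have "pcomputable (\<lambda>a w. let n = cfst w; i = cfst (cfst (csnd w)); j = csnd (cfst (csnd w)) in
    if (if a (halt_index i n) = 1 \<and> a (halt_index j n) = 1 then 1 else (0::nat)) = 0
    then Some (if a (halt_index i n) = a (halt_index j n) then 1 else 0)
    else (case Phi (Phi (oracle_of a) jump_reduction) i n of None \<Rightarrow> None
      | Some vi \<Rightarrow> (case Phi (Phi (oracle_of a) jump_reduction) j n of None \<Rightarrow> None
      | Some vj \<Rightarrow> Some (if vi = vj then 1 else 0))))"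
    unfolding Let_def
    by (intro pcomputable_if_zero) (intro computable_intros | unfold halt_index_def)+
  then show ?thesis unfolding agree_test_def[abs_def] .
qed

lemma agree_test_jump:
  "agree_test (chr (jump X)) w =
    Some (if Phi (chi X) (cfst (cfst (csnd w))) (cfst w) = Phi (chi X) (csnd (cfst (csnd w))) (cfst w) then 1 else 0)"
proof -
  have "Phi (Phi (oracle_of (chr (jump X))) jump_reduction) = Phi (chi X)"
    using Phi_jump_reduction[of X] by (simp add: chi_chr)
  moreover have "chr (jump X) (halt_index i x) = (if Phi (chi X) i x \<noteq> None then 1 else 0)" for i x
    by (simp add: chr_def halt_index_in_jump_iff)
  ultimately show ?thesis
    unfolding agree_test_def Let_def by (auto split: option.splits)
qed

definition neq_index :: "nat \<Rightarrow> nat \<Rightarrow> nat" where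
  "neq_index i j = smn (index_of (partial_mu agree_test)) (cpair i j)"

lemma neq_index_in_jump_jump_iff:
  "neq_index i j \<in> jump (jump X) \<longleftrightarrow> Phi (chi X) i \<noteq> Phi (chi X) j"
proof -
  let ?y = "cpair (cpair i j) (neq_index i j)"
  have "neq_index i j \<in> jump (jump X) \<longleftrightarrow> partial_mu agree_test (chr (jump X)) ?y \<noteq> None"
    unfolding jump_def[of "jump X"] neq_index_def
    by (simp add: Phi_smn chi_chr Phi_index_of[OF pcomputable_partial_mu[OF pcomputable_agree_test]])
  also have "\<dots> \<longleftrightarrow> (\<exists>n. Phi (chi X) i n \<noteq> Phi (chi X) j n)"
  proof
    assume "partial_mu agree_test (chr (jump X)) ?y \<noteq> None"
    then obtain n where "agree_test (chr (jump X)) (cpair n ?y) = Some 0"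
      by (metis option.exhaust partial_mu_eq_Some_iff mu_root_def)
    then show "\<exists>n. Phi (chi X) i n \<noteq> Phi (chi X) j n"
      by (auto simp: agree_test_jump split: if_splits)
  next
    assume "\<exists>n. Phi (chi X) i n \<noteq> Phi (chi X) j n"
    then obtain k where k: "Phi (chi X) i k \<noteq> Phi (chi X) j k" by blast
    have "partial_mu agree_test (chr (jump X)) ?y = Some (LEAST n. Phi (chi X) i n \<noteq> Phi (chi X) j n)"
      by (rule partial_mu_Least[where P = "\<lambda>n. Phi (chi X) i n \<noteq> Phi (chi X) j n", OF _ k])
        (simp add: agree_test_jump)
    then show "partial_mu agree_test (chr (jump X)) ?y \<noteq> None" by simp
  qed
  also have "\<dots> \<longleftrightarrow> Phi (chi X) i \<noteq> Phi (chi X) j" by auto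
  finally show ?thesis .
qed

definition join_index :: "nat \<Rightarrow> nat \<Rightarrow> nat" where
  "join_index i m = smn (index_of (\<lambda>a w. Phi (oracle_of a)
     (if csnd w mod 2 = 0 then cfst (cfst w) else csnd (cfst w)) (csnd w div 2))) (cpair i m)"

lemma Phi_join_index: "Phi (chi X) (join_index i m) = join (Phi (chi X) i) (Phi (chi X) m)"
proof -
  have "computable (\<lambda>a w. cpair (if csnd w mod 2 = 0 then cfst (cfst w) else csnd (cfst w)) (csnd w div 2))"
    by (intro computable_intros zero_less_numeral)
  from pcomputable_comp[OF pcomputable_Phi_universal this]
  have "pcomputable (\<lambda>a w. Phi (oracle_of a)
      (if csnd w mod 2 = 0 then cfst (cfst w) else csnd (cfst w)) (csnd w div 2))"
    by simp
  then show ?thesis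
    unfolding join_index_def
    by (simp add: fun_eq_iff Phi_smn chi_chr Phi_index_of join_def even_iff_mod_2_eq_zero)
qed

definition app_fun :: "(nat \<Rightarrow> nat) \<Rightarrow> nat \<Rightarrow> nat option" where
  "app_fun a w = (case Phi (oracle_of a) (cfst (cfst w)) 0 of
      None \<Rightarrow> None
    | Some e \<Rightarrow> Phi (Phi (oracle_of a) (join_index (cfst (cfst w)) (csnd (cfst w)))) e (csnd w))"

lemma pcomputable_app_fun: "pcomputable app_fun"
proof -
  have g1: "pcomputable (\<lambda>a w. Phi (oracle_of a) (cfst (cpair (cfst (cfst w)) 0)) (csnd (cpair (cfst (cfst w)) 0)))"
    by (rule pcomputable_comp[OF pcomputable_Phi_universal]) (intro computable_intros)
  have g2: "pcomputable (\<lambda>a w. Phi (Phi (oracle_of a)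
      (cfst (cpair (join_index (cfst (cfst (csnd w))) (csnd (cfst (csnd w)))) (cpair (cfst w) (csnd (csnd w))))))
      (cfst (csnd (cpair (join_index (cfst (cfst (csnd w))) (csnd (cfst (csnd w)))) (cpair (cfst w) (csnd (csnd w))))))
      (csnd (csnd (cpair (join_index (cfst (cfst (csnd w))) (csnd (cfst (csnd w)))) (cpair (cfst w) (csnd (csnd w)))))))"
    by (rule pcomputable_comp[OF pcomputable_Phi_Phi_universal]) (unfold join_index_def, intro computable_intros)
  from pcomputable_bind[OF g1 g2] show ?thesis
    unfolding app_fun_def[abs_def] by (simp cong: option.case_cong)
qed

definition app_index :: "nat \<Rightarrow> nat \<Rightarrow> nat" where
  "app_index i m = smn (index_of app_fun) (cpair i m)"

lemma B_app_Phi: "B_app (Phi (chi X) i) (Phi (chi X) m) = Some (Phi (chi X) (app_index i m))"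
  unfolding B_app_def app_index_def
  by (simp add: fun_eq_iff Phi_smn chi_chr Phi_index_of[OF pcomputable_app_fun] app_fun_def
      Phi_join_index[unfolded chi_chr] split: option.split)

section \<open>Embedding \<open>B\<^sup>X\<close> into \<open>K\<^sub>1\<^sup>Y\<close> when \<open>X'' \<le>\<^sub>T Y\<close>\<close>

definition least_index :: "nat set \<Rightarrow> pfun \<Rightarrow> nat" where
  "least_index X \<psi> = (LEAST i. Phi (chi X) i = \<psi>)"

lemma Phi_least_index:
  assumes "\<psi> \<in> B_carrier X"
  shows "Phi (chi X) (least_index X \<psi>) = \<psi>"
proof -
  from assms obtain e where "Phi (chi X) e = \<psi>"
    unfolding B_carrier_def computable_in_def by auto
  then show ?thesis unfolding least_index_def by (rule LeastI)
qed

lemma least_index_Phi: "least_index X (Phi (chi X) i) = (LEAST k. Phi (chi X) k = Phi (chi X) i)"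
  by (simp add: least_index_def)

definition arg_test :: "(nat \<Rightarrow> nat) \<Rightarrow> nat \<Rightarrow> nat option" where
  "arg_test a v = Some (if smn (cfst ((csnd (csnd v) - 7) div 4)) (cfst v) = csnd (csnd v) then 0 else 1)"

definition same_index_test :: "nat \<Rightarrow> (nat \<Rightarrow> nat) \<Rightarrow> nat \<Rightarrow> nat option" where
  "same_index_test d a v = Phi (oracle_of a) d (neq_index (cfst v) (csnd v))"

text \<open>The program with index \<open>p\<close> represents \<open>\<psi> \<in> B\<^sup>X\<close> by \<open>smn p (least_index X \<psi>)\<close>.
  Applied to \<open>smn p j\<close> it cannot refer to its own index \<open>p\<close>, but reads it off the argument
  and recovers \<open>j\<close> by search; the least index of the application is then found by asking
  the oracle for \<open>X''\<close>, computed by \<open>d\<close>, which indices agree.\<close>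

definition embedding_prog :: "nat \<Rightarrow> (nat \<Rightarrow> nat) \<Rightarrow> nat \<Rightarrow> nat option" where
  "embedding_prog d a w = (case partial_mu arg_test a w of
      None \<Rightarrow> None
    | Some j \<Rightarrow> (case partial_mu (same_index_test d) a (app_index (cfst w) j) of
        None \<Rightarrow> None
      | Some k \<Rightarrow> Some (smn (cfst ((csnd w - 7) div 4)) k)))"

lemma pcomputable_embedding_prog: "pcomputable (embedding_prog d)"
proof -
  have "pcomputable arg_test"
    unfolding arg_test_def[abs_def] by (intro pcomputable_Some computable_intros zero_less_numeral)
  moreover have "pcomputable (same_index_test d)"
    unfolding same_index_test_def[abs_def] neq_index_def
    by (rule pcomputable_comp[OF pcomputable_Phi]) (intro computable_intros)
  then have "pcomputable (\<lambda>a w. partial_mu (same_index_test d) a (app_index (cfst (csnd w)) (cfst w)))"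
    by (rule pcomputable_comp[OF pcomputable_partial_mu]) (unfold app_index_def, intro computable_intros)
  moreover have "pcomputable (\<lambda>a w. Some (smn (cfst ((csnd (csnd (csnd w)) - 7) div 4)) (cfst w)))"
    by (intro pcomputable_Some computable_intros zero_less_numeral)
  ultimately have "pcomputable (\<lambda>a w. case partial_mu arg_test a w of
      None \<Rightarrow> None
    | Some j \<Rightarrow> (case partial_mu (same_index_test d) a (app_index (cfst (csnd (cpair j w))) (cfst (cpair j w))) of
        None \<Rightarrow> None
      | Some k \<Rightarrow> Some (smn (cfst ((csnd (csnd (csnd (cpair k (cpair j w)))) - 7) div 4)) (cfst (cpair k (cpair j w))))))"
    by (intro pcomputable_bind pcomputable_partial_mu)
  then show ?thesis unfolding embedding_prog_def[abs_def] by (simp cong: option.case_cong)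
qed

lemma Phi_embedding_prog:
  assumes d: "chi (jump (jump X)) = Phi (chi Y) d"
  defines "p \<equiv> index_of (embedding_prog d)"
  shows "Phi (chi Y) (smn p i) (smn p j) =
    Some (smn p (LEAST k. Phi (chi X) k = Phi (chi X) (app_index i j)))"
proof -
  have "partial_mu arg_test (chr Y) (cpair i (smn p j)) = Some (LEAST k. smn p k = smn p j)"
    by (rule partial_mu_Least) (simp_all add: arg_test_def smn_fst_arg)
  also have "(LEAST k. smn p k = smn p j) = j"
    by (rule Least_equality) (auto dest: smn_inject)
  finally have arg: "partial_mu arg_test (chr Y) (cpair i (smn p j)) = Some j" .
  have d': "Phi (oracle_of (chr Y)) d n = Some (chr (jump (jump X)) n)" for n
    using fun_cong[OF d, of n] by (simp add: chi_chr)
  have "same_index_test d (chr Y) (cpair k m) = Some (if Phi (chi X) k = Phi (chi X) m then 0 else 1)" for k m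
    unfolding same_index_test_def d' by (simp add: chr_def neq_index_in_jump_jump_iff)
  then have "partial_mu (same_index_test d) (chr Y) m = Some (LEAST k. Phi (chi X) k = Phi (chi X) m)" for m
    by (rule partial_mu_Least) (rule refl)
  with arg show ?thesis
    by (simp add: p_def Phi_smn chi_chr Phi_index_of[OF pcomputable_embedding_prog] embedding_prog_def
        smn_fst_arg)
qed

lemma jump_jump_le_imp_embedding:
  assumes "jump (jump X) \<le>\<^sub>T Y"
  shows "\<exists>f. pca_embedding (B_carrier X) B_app K1_carrier (K1_app Y) f"
proof -
  obtain d where d: "chi (jump (jump X)) = Phi (chi Y) d"
    using assms unfolding turing_le_def computable_in_def by blast
  define p where "p = index_of (embedding_prog d)"
  define f where "f \<psi> = smn p (least_index X \<psi>)" for \<psi>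
  have "inj_on f (B_carrier X)"
    by (rule inj_onI) (metis f_def Phi_least_index smn_inject)
  moreover have "K1_app Y (f \<psi>) (f \<chi>) = Some (f c)"
    if "\<psi> \<in> B_carrier X" "\<chi> \<in> B_carrier X" "B_app \<psi> \<chi> = Some c" for \<psi> \<chi> c
  proof -
    let ?i = "least_index X \<psi>" and ?j = "least_index X \<chi>"
    have "c = Phi (chi X) (app_index ?i ?j)"
      using that B_app_Phi[of X ?i ?j] by (simp add: Phi_least_index)
    then show ?thesis
      using Phi_embedding_prog[OF d, of ?i ?j] by (simp add: K1_app_def f_def p_def least_index_Phi)
  qed
  ultimately have "pca_embedding (B_carrier X) B_app K1_carrier (K1_app Y) f"
    unfolding pca_embedding_def K1_carrier_def by blast
  then show ?thesis by blast
qed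

theorem corollary6p19:
  fixes X Y :: "nat set"
  shows "(\<exists>f. pca_embedding (B_carrier X) B_app K1_carrier (K1_app Y) f)
         \<longleftrightarrow> jump (jump X) \<le>\<^sub>T Y"
  using embedding_imp_jump_jump_le jump_jump_le_imp_embedding by blast

end
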